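(* Let $A,B\in\mathbb{R}_+^{m\times n}$ be a WN-pair. Let $\mathcal{E}(A,B)\subseteq\Pi_n$ be the set of vectors $\mathbf{w}$ satisfying the following five conditions, where $S=\operatorname{supp}\mathbf{w}$ and $\ell=|S|$: (i) $\ell\le m$; (ii) the set $\mathcal{I}$ of indices of zero rows of $B[[m],S]$ has $|\mathcal{I}|=m-\ell$ (so $B[[m]\setminus\mathcal{I},S]$ is a monomial matrix); (iii) $A[\mathcal{I},S]=0$; (iv) the matrix $C(\mathbf{w})=B[[m]\setminus\mathcal{I},S]^{-1}A[[m]\setminus\mathcal{I},S]$ is irreducible; (v) the vector $\mathbf{z}>\mathbf{0}$ in $\mathbb{R}^\ell$ obtained by restricting $\mathbf{w}$ to $S$ is a Perron–Frobenius eigenvector of $C(\mathbf{w})$. Then $\mathcal{E}(A,B)$ is finite; for each $\mathbf{w}\in\mathcal{E}(A,B)$ one has $\rho(C(\mathbf{w}))=r(A,B,\mathbf{w})$ and $A\mathbf{w}=\rho(C(\mathbf{w}))B\mathbf{w}$; and $$\hat\rho(A,B)=\min\{r(A,B,\mathbf{w}):\mathbf{w}\in\mathcal{E}(A,B)\}.$$ Moreover, a vector $\mathbf{y}\in\Pi_n$ is minimal weakly optimal if and only if $\mathbf{y}\in\mathcal{E}(A,B)$ and $\mathbf{y}$ attains this minimum; and every minimal weakly optimal vector is a weak GPF-eigenvector.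
   Context: $[m]=\{1,\dots,m\}$; $\Pi_n$ is the set of probability vectors in $\mathbb{R}^n$. For $F\in\mathbb{R}^{m\times n}$, $R\subseteq[m]$, $S\subseteq[n]$, $F[R,S]$ is the submatrix with rows in $R$ and columns in $S$. For $A,B\in\mathbb{R}_+^{m\times n}$ and $\mathbf{x}\in\mathbb{R}^n_+\setminus\{\mathbf{0}\}$, $r(A,B,\mathbf{x})=\max_{i\in[m]}\frac{(A\mathbf{x})_i}{(B\mathbf{x})_i}\in[0,\infty]$ (conventions $\frac00=0$, $\frac c0=\infty$ for $c>0$), and $\hat\rho(A,B)=\inf\{r(A,B,\mathbf{x}):\mathbf{x}\in\mathbb{R}^n_+\setminus\{\mathbf{0}\}\}$. A vector $\mathbf{y}\in\mathbb{R}^n_+\setminus\{\mathbf{0}\}$ is weakly optimal if $r(A,B,\mathbf{y})=\hat\rho(A,B)$, minimal weakly optimal if moreover no weakly optimal vector has support strictly contained in $\operatorname{supp}\mathbf{y}$, and a weak GPF-eigenvector if $A\mathbf{y}=\hat\rho(A,B)B\mathbf{y}$. A pair $A,B\in\mathbb{R}_+^{m\times n}$ is a WN-pair if $n\ge m$, $B$ has no zero row, and each column of $B$ has exactly one positive entry. A square nonnegative matrix is monomial if each row and each column has exactly one positive entry. A square nonnegative matrix $C=[c_{ij}]$ is irreducible if the digraph with an edge $i\to j$ iff $c_{ij}>0$ is strongly connected (a $1\times1$ matrix is irreducible). $\rho(C)$ is the spectral radius, and a Perron–Frobenius eigenvector is a nonnegative nonzero $\mathbf{z}$ with $C\mathbf{z}=\rho(C)\mathbf{z}$.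 *)

theory Defs
  imports "Jordan_Normal_Form.Spectral_Radius" "Jordan_Normal_Form.DL_Submatrix"
    "Jordan_Normal_Form.Gauss_Jordan_Elimination" "HOL-Library.Extended_Real"
begin

(* Matrices are JNF matrices, indices are 0-based: [m] is {0..<m}. *)

definition nonneg_mat :: "real mat \<Rightarrow> bool" where
  "nonneg_mat M \<longleftrightarrow> (\<forall>i<dim_row M. \<forall>j<dim_col M. M $$ (i,j) \<ge> 0)"

definition nonneg_vec :: "real vec \<Rightarrow> bool" where
  "nonneg_vec x \<longleftrightarrow> (\<forall>i<dim_vec x. x $ i \<ge> 0)"

definition prob_vecs :: "nat \<Rightarrow> real vec set" where
  "prob_vecs n = {x. x \<in> carrier_vec n \<and> nonneg_vec x \<and> (\<Sum>i<n. x $ i) = 1}"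

definition supp :: "real vec \<Rightarrow> nat set" where
  "supp x = {i. i < dim_vec x \<and> x $ i \<noteq> 0}"

definition ratio :: "real \<Rightarrow> real \<Rightarrow> ereal" where
  "ratio a b = (if b = 0 then (if a = 0 then 0 else \<infinity>) else ereal (a / b))"

definition r_fun :: "real mat \<Rightarrow> real mat \<Rightarrow> real vec \<Rightarrow> ereal" where
  "r_fun A B x = Max {ratio ((A *\<^sub>v x) $ i) ((B *\<^sub>v x) $ i) | i. i < dim_row A}"

definition rho_hat :: "real mat \<Rightarrow> real mat \<Rightarrow> ereal" where
  "rho_hat A B = Inf {r_fun A B x | x. x \<in> carrier_vec (dim_col A) \<and> nonneg_vec x
                        \<and> x \<noteq> 0\<^sub>v (dim_col A)}"

definition weakly_optimal :: "real mat \<Rightarrow> real mat \<Rightarrow> real vec \<Rightarrow> bool" where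
  "weakly_optimal A B y \<longleftrightarrow> y \<in> carrier_vec (dim_col A) \<and> nonneg_vec y
      \<and> y \<noteq> 0\<^sub>v (dim_col A) \<and> r_fun A B y = rho_hat A B"

definition min_weakly_optimal :: "real mat \<Rightarrow> real mat \<Rightarrow> real vec \<Rightarrow> bool" where
  "min_weakly_optimal A B y \<longleftrightarrow> weakly_optimal A B y
      \<and> \<not> (\<exists>y'. weakly_optimal A B y' \<and> supp y' \<subset> supp y)"

definition weak_GPF_eigenvector :: "real mat \<Rightarrow> real mat \<Rightarrow> real vec \<Rightarrow> bool" where
  "weak_GPF_eigenvector A B y \<longleftrightarrow> y \<in> carrier_vec (dim_col A) \<and> nonneg_vec y
      \<and> y \<noteq> 0\<^sub>v (dim_col A)
      \<and> (\<exists>\<rho>::real. rho_hat A B = ereal \<rho> \<and> A *\<^sub>v y = \<rho> \<cdot>\<^sub>v (B *\<^sub>v y))"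

definition WN_pair :: "nat \<Rightarrow> nat \<Rightarrow> real mat \<Rightarrow> real mat \<Rightarrow> bool" where
  "WN_pair m n A B \<longleftrightarrow> A \<in> carrier_mat m n \<and> B \<in> carrier_mat m n
      \<and> nonneg_mat A \<and> nonneg_mat B \<and> n \<ge> m
      \<and> (\<forall>i<m. \<exists>j<n. B $$ (i,j) \<noteq> 0)
      \<and> (\<forall>j<n. \<exists>!i. i < m \<and> B $$ (i,j) > 0)"

(* irreducibility of a square nonnegative matrix via strong connectivity of its digraph *)
definition irreducible_mat :: "real mat \<Rightarrow> bool" where
  "irreducible_mat C \<longleftrightarrow>
     (\<forall>i<dim_row C. \<forall>j<dim_row C.
        (i,j) \<in> {(a,b). a < dim_row C \<and> b < dim_row C \<and> C $$ (a,b) > 0}\<^sup>*)"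

definition spec_rad :: "real mat \<Rightarrow> real" where
  "spec_rad C = spectral_radius (map_mat complex_of_real C)"

definition PF_eigenvector :: "real mat \<Rightarrow> real vec \<Rightarrow> bool" where
  "PF_eigenvector C z \<longleftrightarrow> z \<in> carrier_vec (dim_row C) \<and> nonneg_vec z
      \<and> z \<noteq> 0\<^sub>v (dim_row C) \<and> C *\<^sub>v z = spec_rad C \<cdot>\<^sub>v z"

definition zero_rows :: "real mat \<Rightarrow> nat set \<Rightarrow> nat set" where
  "zero_rows B S = {i. i < dim_row B \<and> (\<forall>j\<in>S. B $$ (i,j) = 0)}"

definition C_mat :: "real mat \<Rightarrow> real mat \<Rightarrow> real vec \<Rightarrow> real mat" where
  "C_mat A B w = (let S = supp w; R = {0..<dim_row B} - zero_rows B S in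
      the (mat_inverse (submatrix B R S)) * submatrix A R S)"

(* restriction of w to its support S (in increasing order of indices) *)
definition restrict_supp :: "real vec \<Rightarrow> real vec" where
  "restrict_supp w = vec (card (supp w)) (\<lambda>i. w $ pick (supp w) i)"

definition E_set :: "real mat \<Rightarrow> real mat \<Rightarrow> real vec set" where
  "E_set A B = {w. w \<in> prob_vecs (dim_col A) \<and>
      (let S = supp w; l = card S; I = zero_rows B S in
         l \<le> dim_row A
       \<and> card I = dim_row A - l
       \<and> (\<forall>i\<in>I. \<forall>j\<in>S. A $$ (i,j) = 0)
       \<and> irreducible_mat (C_mat A B w)
       \<and> (\<forall>i<l. restrict_supp w $ i > 0)
       \<and> PF_eigenvector (C_mat A B w) (restrict_supp w))}"

end

theory Submission
  imports Defs
begin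

text \<open>Write \<open>\<rho>\<close> for \<open>rho_hat A B\<close>. A compactness argument shows that \<open>\<rho>\<close> is attained, so
  minimal weakly optimal vectors exist. Let \<open>y\<close> be one, and call a row active if it owns (in
  \<open>B\<close>) a column of the support of \<open>y\<close>. Restricting \<open>y\<close> to the columns owned by the rows that
  reach a fixed active row shows that the digraph on active rows, with an edge from \<open>i\<close> to the
  owner of \<open>j\<close> whenever \<open>A i j > 0\<close>, is strongly connected. Slack in one inequality
  \<open>(A y)_i \<le> \<rho> (B y)_i\<close> can then be spread along the edges until all active rows are slack,
  which contradicts the definition of \<open>\<rho>\<close>; hence \<open>A y = \<rho> B y\<close>. If two support columns had
  the same owner, a square linear system on a proper subset of the support would have either a
  kernel, along which \<open>y\<close> can be moved to a smaller support, or a solution improving all active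
  rows at once. So \<open>B\<close> restricted to the support is monomial, \<open>C(y)\<close> is irreducible with
  the positive eigenvector \<open>y\<close> restricted to the support, and its spectral radius is \<open>\<rho>\<close>.
  Conversely, an element of \<open>E(A,B)\<close> is determined by its support, as positive eigenvectors of
  an irreducible matrix are proportional, and irreducibility of \<open>C(w)\<close> rules out weakly optimal
  vectors with smaller support.\<close>

lemma ratio_le_ereal_iff:
  fixes a b l :: real
  assumes "a \<ge> 0" "b \<ge> 0" "l \<ge> 0"
  shows "ratio a b \<le> ereal l \<longleftrightarrow> a \<le> l * b"
proof (cases "b = 0")
  case True
  then show ?thesis using assms by (auto simp: ratio_def)
next
  case False
  then have "b > 0" using assms by auto
  then show ?thesis by (auto simp: ratio_def pos_divide_le_eq mult.commute)
qed

lemma ratio_nonneg: "a \<ge> 0 \<Longrightarrow> b \<ge> 0 \<Longrightarrow> ratio a b \<ge> 0"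
  by (auto simp: ratio_def)

lemma rtrancl_crosses_boundary:
  assumes "(u, v) \<in> R\<^sup>*" "u \<notin> X" "v \<in> X"
  obtains a b where "(a, b) \<in> R" "a \<notin> X" "b \<in> X"
  using assms
proof (induction rule: converse_rtrancl_induct)
  case (step u u')
  then show ?case by (cases "u' \<in> X") auto
qed simp

lemma rtrancl_map:
  assumes "(x, y) \<in> r\<^sup>*" "\<And>a b. (a, b) \<in> r \<Longrightarrow> (f a, f b) \<in> s"
  shows "(f x, f y) \<in> s\<^sup>*"
  using assms(1) by induction (auto intro: rtrancl_into_rtrancl assms(2))

lemma not_inj_on_transversal:
  assumes "\<not> inj_on f S"
  obtains g where "\<And>i. i \<in> f ` S \<Longrightarrow> g i \<in> S" "\<And>i. i \<in> f ` S \<Longrightarrow> f (g i) = i"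
    "g ` f ` S \<subset> S"
proof
  let ?g = "inv_into S f"
  show "?g i \<in> S" "f (?g i) = i" if "i \<in> f ` S" for i
    using that by (auto intro: inv_into_into f_inv_into_f)
  then have "?g ` f ` S \<subseteq> S" by blast
  moreover have "inj_on f (?g ` f ` S)" by (rule inj_onI) (auto simp: f_inv_into_f)
  ultimately show "?g ` f ` S \<subset> S" using assms by auto
qed

lemma bij_betw_pick:
  assumes "finite S"
  shows "bij_betw (pick S) {..<card S} S"
proof -
  have "inj_on (pick S) {..<card S}"
  proof (rule inj_onI, rule ccontr)
    fix a b assume "a \<in> {..<card S}" "b \<in> {..<card S}" "pick S a = pick S b" "a \<noteq> b"
    then show False
      using pick_mono_le[of b S a] pick_mono_le[of a S b] by (auto simp: neq_iff)
  qed
  moreover have "pick S ` {..<card S} = S"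
  proof
    show "pick S ` {..<card S} \<subseteq> S" using pick_in_set_le by auto
    show "S \<subseteq> pick S ` {..<card S}"
    proof
      fix j assume j: "j \<in> S"
      then have "card {a\<in>S. a < j} < card S"
        by (intro psubset_card_mono[OF assms]) auto
      then show "j \<in> pick S ` {..<card S}"
        using pick_card_in_set[OF j] by (intro image_eqI[of _ _ "card {a\<in>S. a < j}"]) auto
    qed
  qed
  ultimately show ?thesis unfolding bij_betw_def by simp
qed

lemma mult_mat_vec_index_sum:
  assumes "i < dim_row M" "dim_vec x = dim_col M"
  shows "(M *\<^sub>v x) $ i = (\<Sum>j<dim_col M. M $$ (i,j) * x $ j)"
  using assms by (simp add: scalar_prod_def atLeast0LessThan)

lemma bounded_coords_convergent_subseq:
  fixes g :: "nat \<Rightarrow> nat \<Rightarrow> real"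
  assumes bounded: "\<And>t i. \<bar>g t i\<bar> \<le> c"
  shows "\<exists>r. strict_mono r \<and> (\<forall>i<k. convergent (\<lambda>t. g (r t) i))"
proof (induction k)
  case 0
  show ?case by (rule exI[of _ id]) (auto simp: strict_mono_def)
next
  case (Suc k)
  then obtain r where r: "strict_mono r" "\<forall>i<k. convergent (\<lambda>t. g (r t) i)" by blast
  obtain s where s: "strict_mono s" "monoseq (\<lambda>t. g (r (s t)) k)"
    using seq_monosub[of "\<lambda>t. g (r t) k"] by blast
  have "Bseq (\<lambda>t. g (r (s t)) k)" using bounded by (intro BseqI'[of _ c]) auto
  then have conv_k: "convergent (\<lambda>t. g (r (s t)) k)" using s(2) by (rule Bseq_monoseq_convergent)
  have "convergent (\<lambda>t. g (r (s t)) i)" if "i < Suc k" for i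
  proof (cases "i = k")
    case False
    then have "i < k" using that by simp
    then obtain L where "(\<lambda>t. g (r t) i) \<longlonglongrightarrow> L" using r(2) convergent_def by blast
    from LIMSEQ_subseq_LIMSEQ[OF this s(1)] show ?thesis
      unfolding convergent_def o_def by blast
  qed (use conv_k in simp)
  moreover have "strict_mono (\<lambda>t. r (s t))" using strict_mono_o[OF r(1) s(1)] by (simp add: o_def)
  ultimately show ?case by blast
qed

text \<open>The system is embedded into an \<open>n \<times> n\<close> one by adding the equations \<open>v $ q = 0\<close> for
  \<open>q \<notin> T\<close>; its determinant decides between the two alternatives.\<close>

lemma supported_system_singular_or_solvable:
  fixes a :: "nat \<Rightarrow> nat \<Rightarrow> real"
  assumes T: "T \<subseteq> {..<n}"
  shows "(\<exists>v\<in>carrier_vec n. v \<noteq> 0\<^sub>v n \<and> (\<forall>j<n. j \<notin> T \<longrightarrow> v $ j = 0)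
            \<and> (\<forall>q\<in>T. (\<Sum>j<n. a q j * v $ j) = 0))
       \<or> (\<forall>c. \<exists>h\<in>carrier_vec n. (\<forall>j<n. j \<notin> T \<longrightarrow> h $ j = 0)
            \<and> (\<forall>q\<in>T. (\<Sum>j<n. a q j * h $ j) = c q))"
proof -
  define K where "K = mat n n (\<lambda>(q,j). if q \<in> T then (if j \<in> T then a q j else 0)
                                      else (if q = j then 1 else (0::real)))"
  have K: "K \<in> carrier_mat n n" unfolding K_def by simp
  have K_outside: "(K *\<^sub>v v) $ q = v $ q" if "q < n" "q \<notin> T" "v \<in> carrier_vec n" for q v
  proof -
    have "(K *\<^sub>v v) $ q = (\<Sum>j<n. (if q = j then 1 else 0) * v $ j)"
      using K that by (subst mult_mat_vec_index_sum) (auto simp: K_def)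
    also have "\<dots> = (\<Sum>j<n. if q = j then v $ j else 0)" by (rule sum.cong) auto
    finally show ?thesis using that by simp
  qed
  have K_inside: "(K *\<^sub>v v) $ q = (\<Sum>j<n. a q j * v $ j)"
    if "q \<in> T" "v \<in> carrier_vec n" "\<forall>j<n. j \<notin> T \<longrightarrow> v $ j = 0" for q v
    using K that T by (subst mult_mat_vec_index_sum) (auto simp: K_def intro!: sum.cong)
  show ?thesis
  proof (cases "det K = 0")
    case True
    then obtain v where v: "v \<in> carrier_vec n" "v \<noteq> 0\<^sub>v n" "K *\<^sub>v v = 0\<^sub>v n"
      using det_0_iff_vec_prod_zero_field[OF K] by auto
    then have "\<forall>j<n. j \<notin> T \<longrightarrow> v $ j = 0" using K_outside by (metis index_zero_vec(1))
    moreover have "(\<Sum>j<n. a q j * v $ j) = 0" if "q \<in> T" for q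
      using K_inside[OF that v(1) calculation] v(3) that T by auto
    ultimately show ?thesis using v(1,2) by blast
  next
    case False
    obtain K' where K': "K' \<in> carrier_mat n n" "K * K' = 1\<^sub>m n"
      using det_non_zero_imp_unit[OF K False, of "()"] unfolding Units_def ring_mat_def by auto
    have "\<exists>h\<in>carrier_vec n. (\<forall>j<n. j \<notin> T \<longrightarrow> h $ j = 0) \<and> (\<forall>q\<in>T. (\<Sum>j<n. a q j * h $ j) = c q)"
      for c
    proof -
      define d where "d = vec n (\<lambda>q. if q \<in> T then c q else 0)"
      define h where "h = K' *\<^sub>v d"
      have h: "h \<in> carrier_vec n" unfolding h_def d_def using K'(1) by auto
      have Kh: "K *\<^sub>v h = d"
        unfolding h_def using assoc_mult_mat_vec[OF K K'(1), of d] K'(2) by (simp add: d_def)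
      have "\<forall>j<n. j \<notin> T \<longrightarrow> h $ j = 0" using K_outside[OF _ _ h] Kh by (simp add: d_def)
      moreover have "(\<Sum>j<n. a q j * h $ j) = c q" if "q \<in> T" for q
        using K_inside[OF that h calculation] Kh that T by (auto simp: d_def)
      ultimately show ?thesis using h by blast
    qed
    then show ?thesis by blast
  qed
qed

text \<open>Compare both eigen-equations at a coordinate maximizing \<open>cmod (v $ i) / z $ i\<close>.\<close>

lemma eigenvalue_norm_le_of_pos_eigenvector:
  fixes C :: "real mat" and z :: "real vec"
  assumes C: "C \<in> carrier_mat k k" "\<And>i j. i < k \<Longrightarrow> j < k \<Longrightarrow> C $$ (i,j) \<ge> 0"
    and z: "z \<in> carrier_vec k" "\<And>i. i < k \<Longrightarrow> z $ i > 0" "C *\<^sub>v z = r \<cdot>\<^sub>v z"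
    and ev: "eigenvalue (map_mat complex_of_real C) mu"
  shows "cmod mu \<le> r"
proof -
  obtain v where v: "v \<in> carrier_vec k" "v \<noteq> 0\<^sub>v k" "map_mat complex_of_real C *\<^sub>v v = mu \<cdot>\<^sub>v v"
    using ev C(1) unfolding eigenvalue_def eigenvector_def by auto
  obtain j1 where j1: "j1 < k" "v $ j1 \<noteq> 0" using v(1,2) by (metis eq_vecI carrier_vecD index_zero_vec)
  define q where "q i = cmod (v $ i) / z $ i" for i
  define t where "t = Max (q ` {..<k})"
  have "t \<in> q ` {..<k}" unfolding t_def by (rule Max_in) (use j1 in auto)
  then obtain i0 where i0: "i0 < k" "t = q i0" by auto
  have q_le: "q i \<le> t" if "i < k" for i unfolding t_def using that by (intro Max_ge) auto
  have v_le: "cmod (v $ i) \<le> t * z $ i" if "i < k" for i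
    using q_le[OF that] z(2)[OF that] unfolding q_def by (simp add: pos_divide_le_eq)
  have "q j1 > 0" unfolding q_def using z(2)[OF j1(1)] j1(2) by simp
  then have "t > 0" using q_le[OF j1(1)] by simp
  have "mu * v $ i0 = (map_mat complex_of_real C *\<^sub>v v) $ i0" using v(1,3) i0(1) by simp
  also have "\<dots> = (\<Sum>j<k. complex_of_real (C $$ (i0,j)) * v $ j)"
    using C(1) v(1) i0(1) by (simp add: scalar_prod_def atLeast0LessThan)
  finally have "cmod mu * cmod (v $ i0) = cmod (\<Sum>j<k. complex_of_real (C $$ (i0,j)) * v $ j)"
    by (metis norm_mult)
  also have "\<dots> \<le> (\<Sum>j<k. cmod (complex_of_real (C $$ (i0,j)) * v $ j))" by (rule norm_sum)
  also have "\<dots> = (\<Sum>j<k. C $$ (i0,j) * cmod (v $ j))"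
    by (rule sum.cong) (use C(2) i0(1) in \<open>auto simp: norm_mult\<close>)
  also have "\<dots> \<le> (\<Sum>j<k. C $$ (i0,j) * (t * z $ j))"
    by (rule sum_mono) (use C(2) i0(1) v_le in \<open>auto intro: mult_left_mono\<close>)
  also have "\<dots> = t * (C *\<^sub>v z) $ i0"
    using C(1) z(1) i0(1) by (simp add: scalar_prod_def atLeast0LessThan sum_distrib_left algebra_simps)
  also have "\<dots> = r * (t * z $ i0)" using z(1,3) i0(1) by simp
  finally have "cmod mu * (t * z $ i0) \<le> r * (t * z $ i0)"
    using i0 z(2)[OF i0(1)] unfolding q_def by simp
  moreover have "t * z $ i0 > 0" using \<open>t > 0\<close> z(2)[OF i0(1)] by simp
  ultimately show ?thesis by (rule mult_right_le_imp_le)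
qed

lemma spec_rad_eq_of_pos_eigenvector:
  fixes C :: "real mat" and z :: "real vec"
  assumes C: "C \<in> carrier_mat k k" "\<And>i j. i < k \<Longrightarrow> j < k \<Longrightarrow> C $$ (i,j) \<ge> 0" and k: "k > 0"
    and z: "z \<in> carrier_vec k" "\<And>i. i < k \<Longrightarrow> z $ i > 0" "C *\<^sub>v z = r \<cdot>\<^sub>v z"
    and r: "r \<ge> 0"
  shows "spec_rad C = r"
proof -
  let ?C = "map_mat complex_of_real C" and ?z = "map_vec complex_of_real z"
  have C': "?C \<in> carrier_mat k k" using C(1) by simp
  have "?C *\<^sub>v ?z = complex_of_real r \<cdot>\<^sub>v ?z"
  proof (rule eq_vecI)
    fix i assume "i < dim_vec (complex_of_real r \<cdot>\<^sub>v ?z)"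
    then have i: "i < k" using z(1) by simp
    have "(?C *\<^sub>v ?z) $ i = complex_of_real ((C *\<^sub>v z) $ i)"
      using C(1) z(1) i by (simp add: scalar_prod_def atLeast0LessThan)
    then show "(?C *\<^sub>v ?z) $ i = (complex_of_real r \<cdot>\<^sub>v ?z) $ i" using z(1,3) i by simp
  qed (use C(1) z(1) in simp)
  moreover have "?z $ 0 \<noteq> 0" using z(1) z(2)[OF k] k by simp
  then have "?z \<noteq> 0\<^sub>v k" using k by auto
  ultimately have "eigenvector ?C ?z (complex_of_real r)"
    using C(1) z(1) unfolding eigenvector_def by simp
  then have "complex_of_real r \<in> spectrum ?C" unfolding spectrum_def eigenvalue_def by blast
  then have "cmod (complex_of_real r) \<in> norm ` spectrum ?C" by (rule imageI)
  then have "r \<le> spectral_radius ?C" using spectral_radius_mem_max(2)[OF C' k] r by simp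
  moreover obtain mu where "mu \<in> spectrum ?C" "spectral_radius ?C = cmod mu"
    using spectral_radius_mem_max(1)[OF C' k] by auto
  then have "spectral_radius ?C \<le> r"
    using eigenvalue_norm_le_of_pos_eigenvector[OF C z] unfolding spectrum_def by auto
  ultimately show ?thesis unfolding spec_rad_def by simp
qed

text \<open>If \<open>t\<close> is the least ratio \<open>z2 $ i / z1 $ i\<close>, then \<open>z2 - t z1\<close> is a nonnegative eigenvector
  vanishing somewhere; its zeros propagate along the edges of the digraph of \<open>C\<close>.\<close>

lemma irreducible_pos_eigenvectors_proportional:
  fixes C :: "real mat"
  assumes C: "C \<in> carrier_mat k k" "\<And>i j. i < k \<Longrightarrow> j < k \<Longrightarrow> C $$ (i,j) \<ge> 0"
    and irr: "irreducible_mat C"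
    and z1: "z1 \<in> carrier_vec k" "\<And>i. i < k \<Longrightarrow> z1 $ i > 0" "C *\<^sub>v z1 = r \<cdot>\<^sub>v z1"
    and z2: "z2 \<in> carrier_vec k" "\<And>i. i < k \<Longrightarrow> z2 $ i > 0" "C *\<^sub>v z2 = r \<cdot>\<^sub>v z2"
  shows "\<exists>t. \<forall>i<k. z2 $ i = t * z1 $ i"
proof (cases "k = 0")
  case False
  define q where "q i = z2 $ i / z1 $ i" for i
  define t where "t = Min (q ` {..<k})"
  have "t \<in> q ` {..<k}" unfolding t_def by (rule Min_in) (use False in auto)
  then obtain i0 where i0: "i0 < k" "t = q i0" by auto
  define u where "u i = z2 $ i - t * z1 $ i" for i
  have u_nonneg: "u i \<ge> 0" if "i < k" for i
  proof -
    have "t \<le> q i" unfolding t_def using that by (intro Min_le) auto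
    then show ?thesis using z1(2)[OF that] unfolding u_def q_def by (simp add: pos_le_divide_eq)
  qed
  have u_eigen: "(\<Sum>j<k. C $$ (i,j) * u j) = r * u i" if "i < k" for i
  proof -
    have "(\<Sum>j<k. C $$ (i,j) * u j) = (C *\<^sub>v z2) $ i - t * (C *\<^sub>v z1) $ i"
      using C(1) z1(1) z2(1) that unfolding u_def
      by (simp add: scalar_prod_def atLeast0LessThan algebra_simps sum_subtractf sum_distrib_left)
    then show ?thesis unfolding z1(3) z2(3) u_def using that z1(1) z2(1) by (simp add: algebra_simps)
  qed
  have zero_step: "u j = 0" if "i < k" "u i = 0" "j < k" "C $$ (i,j) > 0" for i j
  proof -
    have "\<forall>j'\<in>{..<k}. C $$ (i,j') * u j' = 0"
      using u_eigen[OF that(1)] that(1,2) C(2) u_nonneg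
      by (subst sum_nonneg_eq_0_iff[symmetric]) auto
    then have "C $$ (i,j) * u j = 0" using that(3) by blast
    then show ?thesis using that(4) by simp
  qed
  have "u j = 0" if "(i0, j) \<in> {(a,b). a < dim_row C \<and> b < dim_row C \<and> C $$ (a,b) > 0}\<^sup>*" for j
    using that
  proof (induction rule: rtrancl_induct)
    case base
    show ?case unfolding u_def i0(2) q_def using z1(2)[OF i0(1)] by simp
  next
    case (step a b)
    then show ?case using C(1) zero_step[of a b] by auto
  qed
  then have "z2 $ i = t * z1 $ i" if "i < k" for i
    using irr that i0(1) C(1) unfolding irreducible_mat_def u_def by auto
  then show ?thesis by blast
qed simp

locale wn_pair =
  fixes A B :: "real mat" and m n :: nat
  assumes rows_pos: "m > 0" and WN: "WN_pair m n A B"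
begin

lemma A_carrier: "A \<in> carrier_mat m n" and B_carrier: "B \<in> carrier_mat m n"
  and A_nonneg: "i < m \<Longrightarrow> j < n \<Longrightarrow> A $$ (i,j) \<ge> 0"
  and B_nonneg: "i < m \<Longrightarrow> j < n \<Longrightarrow> B $$ (i,j) \<ge> 0"
  and B_row_nonzero: "i < m \<Longrightarrow> \<exists>j<n. B $$ (i,j) \<noteq> 0"
  and B_col_unique: "j < n \<Longrightarrow> \<exists>!i. i < m \<and> B $$ (i,j) > 0"
  using WN unfolding WN_pair_def nonneg_mat_def by auto

lemma cols_pos: "n > 0"
  using rows_pos WN unfolding WN_pair_def by auto

definition row_of :: "nat \<Rightarrow> nat" where
  "row_of j = (THE i. i < m \<and> B $$ (i,j) > 0)"

definition pivot :: "nat \<Rightarrow> real" where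
  "pivot j = B $$ (row_of j, j)"

lemma row_of_lt: "j < n \<Longrightarrow> row_of j < m"
  and pivot_pos: "j < n \<Longrightarrow> pivot j > 0"
  using theI'[OF B_col_unique] unfolding row_of_def pivot_def by auto

lemma B_index: "j < n \<Longrightarrow> i < m \<Longrightarrow> B $$ (i,j) = (if i = row_of j then pivot j else 0)"
  using B_col_unique[of j] row_of_lt[of j] pivot_pos[of j] B_nonneg[of i j]
  unfolding pivot_def by (metis less_eq_real_def)

definition Ax :: "nat \<Rightarrow> real vec \<Rightarrow> real" where
  "Ax i x = (\<Sum>j<n. A $$ (i,j) * x $ j)"

definition Bx :: "nat \<Rightarrow> real vec \<Rightarrow> real" where
  "Bx i x = (\<Sum>j<n. B $$ (i,j) * x $ j)"

lemma mult_A_index: "i < m \<Longrightarrow> dim_vec x = n \<Longrightarrow> (A *\<^sub>v x) $ i = Ax i x"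
  using A_carrier unfolding Ax_def by (subst mult_mat_vec_index_sum) auto

lemma mult_B_index: "i < m \<Longrightarrow> dim_vec x = n \<Longrightarrow> (B *\<^sub>v x) $ i = Bx i x"
  using B_carrier unfolding Bx_def by (subst mult_mat_vec_index_sum) auto

lemma Bx_eq_sum_row_of:
  assumes "i < m"
  shows "Bx i x = (\<Sum>j | j < n \<and> row_of j = i. pivot j * x $ j)"
proof -
  have "Bx i x = (\<Sum>j<n. if row_of j = i then pivot j * x $ j else 0)"
    unfolding Bx_def by (rule sum.cong) (auto simp: B_index assms)
  also have "\<dots> = (\<Sum>j | j < n \<and> row_of j = i. pivot j * x $ j)"
    by (subst sum.If_cases) (auto intro!: sum.cong)
  finally show ?thesis .
qed

lemma Ax_nonneg: "nonneg_vec x \<Longrightarrow> dim_vec x = n \<Longrightarrow> i < m \<Longrightarrow> Ax i x \<ge> 0"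
  unfolding Ax_def nonneg_vec_def by (auto intro!: sum_nonneg mult_nonneg_nonneg A_nonneg)

lemma Bx_nonneg: "nonneg_vec x \<Longrightarrow> dim_vec x = n \<Longrightarrow> i < m \<Longrightarrow> Bx i x \<ge> 0"
  unfolding Bx_def nonneg_vec_def by (auto intro!: sum_nonneg mult_nonneg_nonneg B_nonneg)

lemma Ax_smult: "Ax i (c \<cdot>\<^sub>v x) = c * Ax i x" if "dim_vec x = n"
  using that unfolding Ax_def by (simp add: sum_distrib_left algebra_simps)

lemma Bx_smult: "Bx i (c \<cdot>\<^sub>v x) = c * Bx i x" if "dim_vec x = n"
  using that unfolding Bx_def by (simp add: sum_distrib_left algebra_simps)

lemma Ax_add_scaled: "Ax i (vec n (\<lambda>j. x $ j + t * w $ j)) = Ax i x + t * Ax i w"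
  unfolding Ax_def by (simp add: algebra_simps sum.distrib sum_distrib_left)

lemma Bx_add_scaled: "Bx i (vec n (\<lambda>j. x $ j + t * w $ j)) = Bx i x + t * Bx i w"
  unfolding Bx_def by (simp add: algebra_simps sum.distrib sum_distrib_left)

definition cone :: "real vec set" where
  "cone = {x. x \<in> carrier_vec n \<and> nonneg_vec x \<and> x \<noteq> 0\<^sub>v n}"

lemma coneD:
  assumes "x \<in> cone"
  shows "x \<in> carrier_vec n" "dim_vec x = n" "nonneg_vec x" "\<And>j. j < n \<Longrightarrow> x $ j \<ge> 0"
  using assms unfolding cone_def nonneg_vec_def by auto

lemma coneI:
  assumes "x \<in> carrier_vec n" "\<And>j. j < n \<Longrightarrow> x $ j \<ge> 0" "j < n" "x $ j \<noteq> 0"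
  shows "x \<in> cone"
  using assms unfolding cone_def nonneg_vec_def by auto

lemma mem_supp_iff: "x \<in> cone \<Longrightarrow> j \<in> supp x \<longleftrightarrow> j < n \<and> x $ j \<noteq> 0"
  unfolding supp_def cone_def by auto

lemma supp_pos: "x \<in> cone \<Longrightarrow> j \<in> supp x \<Longrightarrow> x $ j > 0"
  using coneD(4) mem_supp_iff by force

lemma supp_lt: "x \<in> cone \<Longrightarrow> j \<in> supp x \<Longrightarrow> j < n"
  using mem_supp_iff by blast

lemma supp_nonempty:
  assumes "x \<in> cone"
  shows "supp x \<noteq> {}"
proof
  assume "supp x = {}"
  then have "x = 0\<^sub>v n"
    using coneD(2)[OF assms] mem_supp_iff[OF assms] by (intro eq_vecI) auto
  with assms show False unfolding cone_def by simp
qed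

lemma finite_supp: "finite (supp x)"
  unfolding supp_def by auto

lemma cone_sum_pos:
  assumes "x \<in> cone"
  shows "(\<Sum>j<n. x $ j) > 0"
proof -
  obtain j where j: "j \<in> supp x" using supp_nonempty[OF assms] by blast
  have "j < n" "x $ j > 0" using j supp_lt supp_pos assms by auto
  then show ?thesis using coneD(4)[OF assms] by (intro sum_pos2[of _ j]) auto
qed

lemma prob_vecs_subset_cone: "prob_vecs n \<subseteq> cone"
proof
  fix w assume w: "w \<in> prob_vecs n"
  then have "(\<Sum>j<n. w $ j) = 1" unfolding prob_vecs_def by simp
  then obtain j where "j < n" "w $ j \<noteq> 0" by (metis (no_types, lifting) lessThan_iff sum.neutral zero_neq_one)
  then show "w \<in> cone" using w unfolding prob_vecs_def nonneg_vec_def by (intro coneI) auto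
qed

lemma r_fun_eq_Max: "r_fun A B x = Max ((\<lambda>i. ratio ((A *\<^sub>v x) $ i) ((B *\<^sub>v x) $ i)) ` {..<m})"
proof -
  have "{ratio ((A *\<^sub>v x) $ i) ((B *\<^sub>v x) $ i) | i. i < dim_row A}
     = (\<lambda>i. ratio ((A *\<^sub>v x) $ i) ((B *\<^sub>v x) $ i)) ` {..<m}"
    using A_carrier by (auto simp del: index_mult_mat_vec)
  then show ?thesis unfolding r_fun_def by simp
qed

lemma ratio_le_r_fun: "i < m \<Longrightarrow> ratio ((A *\<^sub>v x) $ i) ((B *\<^sub>v x) $ i) \<le> r_fun A B x"
  unfolding r_fun_eq_Max by (intro Max_ge) auto

definition sub_eigen :: "real \<Rightarrow> real vec \<Rightarrow> bool" where
  "sub_eigen l x \<longleftrightarrow> (\<forall>i<m. Ax i x \<le> l * Bx i x)"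

lemma r_fun_le_iff:
  assumes "x \<in> carrier_vec n" "nonneg_vec x" "l \<ge> 0"
  shows "r_fun A B x \<le> ereal l \<longleftrightarrow> sub_eigen l x"
proof -
  have dim: "dim_vec x = n" using assms by auto
  have "ratio ((A *\<^sub>v x) $ i) ((B *\<^sub>v x) $ i) \<le> ereal l \<longleftrightarrow> Ax i x \<le> l * Bx i x"
    if "i < m" for i
    unfolding mult_A_index[OF that dim] mult_B_index[OF that dim]
    by (rule ratio_le_ereal_iff) (use Ax_nonneg Bx_nonneg assms dim that in auto)
  then show ?thesis
    unfolding r_fun_eq_Max sub_eigen_def using rows_pos by (subst Max_le_iff) auto
qed

lemma r_fun_nonneg:
  assumes "x \<in> cone"
  shows "r_fun A B x \<ge> 0"
proof -
  have "0 \<le> ratio ((A *\<^sub>v x) $ 0) ((B *\<^sub>v x) $ 0)"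
    unfolding mult_A_index[OF rows_pos coneD(2)[OF assms]] mult_B_index[OF rows_pos coneD(2)[OF assms]]
    by (intro ratio_nonneg Ax_nonneg Bx_nonneg) (use coneD[OF assms] rows_pos in auto)
  also have "\<dots> \<le> r_fun A B x" by (rule ratio_le_r_fun[OF rows_pos])
  finally show ?thesis .
qed

lemma rho_hat_eq_Inf_cone: "rho_hat A B = Inf (r_fun A B ` cone)"
proof -
  have "{r_fun A B x | x. x \<in> carrier_vec (dim_col A) \<and> nonneg_vec x \<and> x \<noteq> 0\<^sub>v (dim_col A)}
     = r_fun A B ` cone"
    using A_carrier unfolding cone_def by auto
  then show ?thesis unfolding rho_hat_def by simp
qed

lemma rho_hat_le_r_fun: "x \<in> cone \<Longrightarrow> rho_hat A B \<le> r_fun A B x"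
  unfolding rho_hat_eq_Inf_cone by (rule Inf_lower) auto

lemma rho_hat_nonneg: "rho_hat A B \<ge> 0"
  unfolding rho_hat_eq_Inf_cone by (rule Inf_greatest) (auto intro: r_fun_nonneg)

lemma rho_hat_finite: "\<bar>rho_hat A B\<bar> \<noteq> \<infinity>"
proof -
  define u where "u = vec n (\<lambda>_. 1 :: real)"
  have u: "u \<in> cone" unfolding u_def using cols_pos by (intro coneI[of _ 0]) auto
  have "r_fun A B u \<in> (\<lambda>i. ratio ((A *\<^sub>v u) $ i) ((B *\<^sub>v u) $ i)) ` {..<m}"
    unfolding r_fun_eq_Max using rows_pos by (intro Max_in) auto
  then obtain i where i: "i < m" "r_fun A B u = ratio ((A *\<^sub>v u) $ i) ((B *\<^sub>v u) $ i)" by auto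
  obtain j where j: "j < n" "B $$ (i,j) \<noteq> 0" using B_row_nonzero[OF i(1)] by auto
  have "B $$ (i,j) * u $ j \<le> Bx i u"
    unfolding Bx_def by (rule member_le_sum) (use j i B_nonneg in \<open>auto simp: u_def\<close>)
  moreover have "B $$ (i,j) * u $ j > 0" using j B_nonneg[OF i(1) j(1)] by (auto simp: u_def)
  ultimately have "(B *\<^sub>v u) $ i \<noteq> 0" using mult_B_index[OF i(1)] coneD(2)[OF u] by auto
  then have "r_fun A B u \<noteq> \<infinity>" using i(2) by (simp add: ratio_def)
  then show ?thesis using rho_hat_le_r_fun[OF u] rho_hat_nonneg by auto
qed

definition rho :: real where
  "rho = real_of_ereal (rho_hat A B)"

lemma rho_hat_eq_rho: "rho_hat A B = ereal rho"
  using rho_hat_finite unfolding rho_def by (cases "rho_hat A B") auto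

lemma rho_nonneg: "rho \<ge> 0"
  using rho_hat_nonneg unfolding rho_hat_eq_rho by simp

lemma rho_le_if_sub_eigen:
  assumes "x \<in> cone" "l \<ge> 0" "sub_eigen l x"
  shows "rho \<le> l"
proof -
  have "r_fun A B x \<le> ereal l" using r_fun_le_iff coneD assms by blast
  then have "ereal rho \<le> ereal l"
    using rho_hat_le_r_fun[OF assms(1)] unfolding rho_hat_eq_rho by (rule order.trans[rotated])
  then show ?thesis by simp
qed

lemma weakly_optimal_iff: "weakly_optimal A B y \<longleftrightarrow> y \<in> cone \<and> sub_eigen rho y"
proof -
  have "r_fun A B y = rho_hat A B \<longleftrightarrow> r_fun A B y \<le> ereal rho" if "y \<in> cone"
    using rho_hat_le_r_fun[OF that] rho_hat_eq_rho by auto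
  then show ?thesis
    using r_fun_le_iff[OF _ _ rho_nonneg] A_carrier
    unfolding weakly_optimal_def cone_def by auto
qed

lemma normalize_to_prob_vec:
  assumes "x \<in> cone"
  defines "x' \<equiv> (1 / (\<Sum>j<n. x $ j)) \<cdot>\<^sub>v x"
  shows "x' \<in> prob_vecs n" "x' \<in> cone" "supp x' = supp x" "sub_eigen l x \<Longrightarrow> sub_eigen l x'"
proof -
  let ?s = "\<Sum>j<n. x $ j"
  have s: "?s > 0" by (rule cone_sum_pos[OF assms(1)])
  note x = coneD[OF assms(1)]
  have x'_index: "j < n \<Longrightarrow> x' $ j = x $ j / ?s" for j unfolding x'_def using x by auto
  have "(\<Sum>j<n. x' $ j) = (\<Sum>j<n. x $ j / ?s)" by (rule sum.cong) (auto simp: x'_index)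
  also have "\<dots> = 1" using s by (simp add: sum_divide_distrib[symmetric])
  finally have sum1: "(\<Sum>j<n. x' $ j) = 1" .
  have x'_nonneg: "j < n \<Longrightarrow> x' $ j \<ge> 0" for j using x'_index x(4) s by simp
  have x'_carrier: "x' \<in> carrier_vec n" unfolding x'_def using x by auto
  then show "x' \<in> prob_vecs n"
    using sum1 x'_nonneg unfolding prob_vecs_def nonneg_vec_def by auto
  then show "x' \<in> cone" using prob_vecs_subset_cone by blast
  show "supp x' = supp x" unfolding supp_def using x'_index s x x'_carrier by auto
  show "sub_eigen l x'" if "sub_eigen l x"
    using that Ax_smult[OF x(2)] Bx_smult[OF x(2)] s
    unfolding sub_eigen_def x'_def by (auto simp: divide_right_mono)
qed

lemma prob_vec_sub_eigen_exists:
  assumes "rho < l"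
  shows "\<exists>x\<in>prob_vecs n. sub_eigen l x"
proof -
  have "rho_hat A B < ereal l" unfolding rho_hat_eq_rho using assms by simp
  then obtain x where x: "x \<in> cone" "r_fun A B x < ereal l"
    unfolding rho_hat_eq_Inf_cone Inf_less_iff by auto
  have "l \<ge> 0" using rho_nonneg assms by simp
  then have "sub_eigen l x" using r_fun_le_iff[OF coneD(1,3)[OF x(1)]] x(2) by force
  with normalize_to_prob_vec[OF x(1)] show ?thesis by blast
qed

text \<open>Compactness: a convergent subsequence of probability vectors that are sub-eigen for values
  decreasing to \<open>rho\<close> has a weakly optimal limit.\<close>

lemma weakly_optimal_exists: "\<exists>x. weakly_optimal A B x"
proof -
  define d :: "nat \<Rightarrow> real" where "d k = rho + inverse (real (Suc k))" for k
  have "\<exists>x\<in>prob_vecs n. sub_eigen (d k) x" for k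
    by (rule prob_vec_sub_eigen_exists) (simp add: d_def)
  then obtain f where f: "\<And>k. f k \<in> prob_vecs n" "\<And>k. sub_eigen (d k) (f k)" by metis
  have f_carrier: "f k \<in> carrier_vec n" and f_nonneg: "j < n \<Longrightarrow> f k $ j \<ge> 0"
    and f_sum: "(\<Sum>j<n. f k $ j) = 1" for k j
    using f(1)[of k] unfolding prob_vecs_def nonneg_vec_def by auto
  have "\<bar>if j < n then f k $ j else 0\<bar> \<le> 1" for k j
    using member_le_sum[of j "{..<n}" "\<lambda>j. f k $ j"] f_nonneg f_sum by auto
  then obtain r where r: "strict_mono r"
    "\<forall>j<n. convergent (\<lambda>t. if j < n then f (r t) $ j else 0)"
    using bounded_coords_convergent_subseq[of "\<lambda>t j. if j < n then f t $ j else 0" 1 n] by blast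
  define x where "x = vec n (\<lambda>j. lim (\<lambda>t. f (r t) $ j))"
  have conv: "(\<lambda>t. f (r t) $ j) \<longlonglongrightarrow> x $ j" if "j < n" for j
    using r(2) that unfolding x_def by (auto simp: convergent_LIMSEQ_iff)
  have x_carrier: "x \<in> carrier_vec n" unfolding x_def by simp
  have x_nonneg: "x $ j \<ge> 0" if "j < n" for j
    using f_nonneg that by (intro LIMSEQ_le_const[OF conv[OF that]]) auto
  have "(\<lambda>t. \<Sum>j<n. f (r t) $ j) \<longlonglongrightarrow> (\<Sum>j<n. x $ j)"
    by (rule tendsto_sum) (use conv in auto)
  then have "(\<Sum>j<n. x $ j) = 1" using f_sum by (simp add: LIMSEQ_const_iff)
  then have "x \<in> prob_vecs n" using x_carrier x_nonneg unfolding prob_vecs_def nonneg_vec_def by auto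
  then have x_cone: "x \<in> cone" using prob_vecs_subset_cone by blast
  have "sub_eigen rho x" unfolding sub_eigen_def
  proof (intro allI impI)
    fix i assume i: "i < m"
    have "(\<lambda>t. Ax i (f (r t)) - d (r t) * Bx i (f (r t))) \<longlonglongrightarrow> Ax i x - rho * Bx i x"
      unfolding Ax_def Bx_def
      using LIMSEQ_subseq_LIMSEQ[OF LIMSEQ_inverse_real_of_nat_add[of rho] r(1)]
      by (intro tendsto_intros) (use conv in \<open>auto simp: d_def o_def\<close>)
    moreover have "\<forall>t. Ax i (f (r t)) - d (r t) * Bx i (f (r t)) \<le> 0"
      using f(2) i unfolding sub_eigen_def by auto
    ultimately have "Ax i x - rho * Bx i x \<le> 0" by (intro LIMSEQ_le_const2) auto
    then show "Ax i x \<le> rho * Bx i x" by simp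
  qed
  with x_cone show ?thesis using weakly_optimal_iff by blast
qed

definition active_rows :: "real vec \<Rightarrow> nat set" where
  "active_rows x = row_of ` supp x"

lemma active_rows_lt: "x \<in> cone \<Longrightarrow> i \<in> active_rows x \<Longrightarrow> i < m"
  unfolding active_rows_def using row_of_lt supp_lt by auto

lemma Bx_eq_0:
  assumes "i < m" "\<And>j. j < n \<Longrightarrow> row_of j = i \<Longrightarrow> x $ j = 0"
  shows "Bx i x = 0"
  unfolding Bx_eq_sum_row_of[OF assms(1)] using assms(2) by (intro sum.neutral) auto

lemma Bx_pos_iff:
  assumes x: "x \<in> cone" and i: "i < m"
  shows "Bx i x > 0 \<longleftrightarrow> i \<in> active_rows x"
proof
  assume "i \<in> active_rows x"
  then obtain j where j: "j \<in> supp x" "row_of j = i" unfolding active_rows_def by auto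
  have "j < n" using supp_lt[OF x j(1)] .
  then have "pivot j * x $ j > 0" using pivot_pos supp_pos[OF x j(1)] by simp
  moreover have "pivot j * x $ j \<le> Bx i x"
    unfolding Bx_eq_sum_row_of[OF i] using j \<open>j < n\<close> coneD(4)[OF x] less_imp_le[OF pivot_pos]
    by (intro member_le_sum) (auto intro!: mult_nonneg_nonneg)
  ultimately show "Bx i x > 0" by linarith
next
  assume pos: "Bx i x > 0"
  show "i \<in> active_rows x"
  proof (rule ccontr)
    assume "i \<notin> active_rows x"
    then have "Bx i x = 0"
      using mem_supp_iff[OF x] unfolding active_rows_def by (intro Bx_eq_0[OF i]) force
    with pos show False by simp
  qed
qed

text \<open>Otherwise the largest ratio \<open>Ax i x / Bx i x\<close> over the active rows would be a value
  below \<open>rho\<close> for which \<open>x\<close> is sub-eigen.\<close>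

lemma weakly_optimal_active_row_tight:
  assumes x: "x \<in> cone" and sub: "sub_eigen rho x"
  shows "\<exists>i<m. Bx i x > 0 \<and> Ax i x = rho * Bx i x"
proof (rule ccontr)
  assume "\<not> ?thesis"
  then have strict: "Ax i x < rho * Bx i x" if "i < m" "Bx i x > 0" for i
    using that sub unfolding sub_eigen_def by force
  define Q where "Q = {i. i < m \<and> Bx i x > 0}"
  define l where "l = Max (insert 0 ((\<lambda>i. Ax i x / Bx i x) ` Q))"
  have "finite Q" unfolding Q_def by auto
  have "Q \<noteq> {}"
  proof -
    obtain j where "j \<in> supp x" using supp_nonempty[OF x] by auto
    then have "row_of j < m" "Bx (row_of j) x > 0"
      using Bx_pos_iff[OF x] active_rows_lt[OF x] unfolding active_rows_def by auto
    then show ?thesis unfolding Q_def by blast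
  qed
  have ratio_lt: "Ax i x / Bx i x < rho" if "i \<in> Q" for i
    using strict that unfolding Q_def by (simp add: pos_divide_less_eq)
  have "rho > 0"
  proof -
    obtain i where "i \<in> Q" using \<open>Q \<noteq> {}\<close> by auto
    then show ?thesis
      using ratio_lt[of i] Ax_nonneg[OF coneD(3,2)[OF x]] unfolding Q_def
      by (smt (verit) divide_nonneg_pos mem_Collect_eq)
  qed
  have "l < rho" unfolding l_def using \<open>finite Q\<close> \<open>rho > 0\<close> ratio_lt by (subst Max_less_iff) auto
  moreover have "sub_eigen l x" unfolding sub_eigen_def
  proof (intro allI impI)
    fix i assume i: "i < m"
    show "Ax i x \<le> l * Bx i x"
    proof (cases "Bx i x > 0")
      case True
      then have "Ax i x / Bx i x \<le> l" unfolding l_def using \<open>finite Q\<close> i Q_def by (intro Max_ge) auto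
      then show ?thesis using True by (simp add: pos_divide_le_eq)
    next
      case False
      then show ?thesis using sub i Bx_nonneg[OF coneD(3,2)[OF x] i] unfolding sub_eigen_def by force
    qed
  qed
  moreover have "l \<ge> 0" unfolding l_def using \<open>finite Q\<close> by simp
  ultimately show False using rho_le_if_sub_eigen[OF x] by force
qed

lemma inactive_row_A_zero:
  assumes y: "y \<in> cone" "sub_eigen rho y" and i: "i < m" "i \<notin> active_rows y"
    and j: "j \<in> supp y"
  shows "A $$ (i,j) = 0"
proof -
  have "Bx i y = 0" using Bx_pos_iff[OF y(1) i(1)] i(2) Bx_nonneg[OF coneD(3,2)[OF y(1)] i(1)] by simp
  then have "Ax i y = 0"
    using y(2) i(1) Ax_nonneg[OF coneD(3,2)[OF y(1)] i(1)] unfolding sub_eigen_def by force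
  then have "\<forall>j\<in>{..<n}. A $$ (i,j) * y $ j = 0"
    unfolding Ax_def using A_nonneg[OF i(1)] coneD(4)[OF y(1)] by (subst sum_nonneg_eq_0_iff[symmetric]) auto
  then show ?thesis using j supp_lt[OF y(1)] supp_pos[OF y(1)] by fastforce
qed

lemma inactive_row_annihilates:
  assumes y: "y \<in> cone" "sub_eigen rho y" and i: "i < m" "i \<notin> active_rows y"
    and v: "\<And>j. j < n \<Longrightarrow> j \<notin> supp y \<Longrightarrow> v $ j = 0"
  shows "Ax i v = 0" "Bx i v = 0"
proof -
  show "Ax i v = 0"
    unfolding Ax_def using v inactive_row_A_zero[OF y i] by (intro sum.neutral) (metis lessThan_iff mult_eq_0_iff)
  have "row_of j \<noteq> i" if "j \<in> supp y" for j using i(2) that unfolding active_rows_def by auto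
  then show "Bx i v = 0" using v by (intro Bx_eq_0[OF i(1)]) (metis mem_supp_iff y(1))
qed

lemma min_weakly_optimal_iff:
  "min_weakly_optimal A B y \<longleftrightarrow> y \<in> cone \<and> sub_eigen rho y
     \<and> (\<forall>x. x \<in> cone \<longrightarrow> sub_eigen rho x \<longrightarrow> supp x \<subseteq> supp y \<longrightarrow> supp x = supp y)"
  unfolding min_weakly_optimal_def weakly_optimal_iff by blast

definition support_graph :: "real vec \<Rightarrow> (nat \<times> nat) set" where
  "support_graph y = {(i, i'). i \<in> active_rows y \<and> i' \<in> active_rows y
      \<and> (\<exists>j\<in>supp y. row_of j = i' \<and> A $$ (i,j) > 0)}"

definition restrict_rows :: "nat set \<Rightarrow> real vec \<Rightarrow> real vec" where
  "restrict_rows D x = vec n (\<lambda>j. if row_of j \<in> D then x $ j else 0)"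

lemma supp_restrict_rows:
  assumes "x \<in> cone"
  shows "supp (restrict_rows D x) = {j \<in> supp x. row_of j \<in> D}"
  using coneD(2)[OF assms] unfolding supp_def restrict_rows_def by (auto split: if_splits)

lemma restrict_rows_cone:
  assumes x: "x \<in> cone" and D: "D \<inter> active_rows x \<noteq> {}"
  shows "restrict_rows D x \<in> cone"
proof -
  obtain j where j: "j \<in> supp x" "row_of j \<in> D" using D unfolding active_rows_def by auto
  then show ?thesis
    using coneD(4)[OF x] supp_lt[OF x j(1)] supp_pos[OF x j(1)]
    by (intro coneI[of _ j]) (auto simp: restrict_rows_def)
qed

text \<open>Restricting to the columns owned by a set of rows that is closed under incoming edges of
  the support graph keeps those rows unchanged and makes all other rows vanish.\<close>

lemma sub_eigen_restrict_rows:
  assumes y: "y \<in> cone" "sub_eigen rho y"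
    and closed: "\<And>i j. i \<in> active_rows y \<Longrightarrow> j \<in> supp y \<Longrightarrow> row_of j \<in> D \<Longrightarrow> A $$ (i,j) > 0 \<Longrightarrow> i \<in> D"
  shows "sub_eigen rho (restrict_rows D y)"
  unfolding sub_eigen_def
proof (intro allI impI)
  fix i assume i: "i < m"
  let ?x = "restrict_rows D y"
  have x_index: "j < n \<Longrightarrow> ?x $ j = (if row_of j \<in> D then y $ j else 0)" for j
    unfolding restrict_rows_def by simp
  show "Ax i ?x \<le> rho * Bx i ?x"
  proof (cases "i \<in> D")
    case True
    have "Ax i ?x \<le> Ax i y" unfolding Ax_def
      by (rule sum_mono) (use x_index coneD(4)[OF y(1)] A_nonneg i in \<open>auto intro: mult_left_mono\<close>)
    moreover have "Bx i ?x = Bx i y"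
      unfolding Bx_eq_sum_row_of[OF i] using x_index True by (intro sum.cong) auto
    ultimately show ?thesis using y(2) i unfolding sub_eigen_def by fastforce
  next
    case False
    have "A $$ (i,j) * ?x $ j = 0" if "j < n" for j
    proof (cases "i \<in> active_rows y \<and> j \<in> supp y \<and> row_of j \<in> D")
      case True
      then show ?thesis using closed[of i j] False A_nonneg[OF i that] by fastforce
    next
      case False
      then show ?thesis
        using x_index[OF that] that inactive_row_A_zero[OF y i] mem_supp_iff[OF y(1)] by auto
    qed
    then have "Ax i ?x = 0" unfolding Ax_def by (intro sum.neutral) auto
    moreover have "Bx i ?x \<ge> 0"
      using Bx_nonneg[of ?x] coneD(4)[OF y(1)] i unfolding nonneg_vec_def restrict_rows_def by simp
    ultimately show ?thesis using rho_nonneg by simp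
  qed
qed

lemma min_weakly_optimal_strongly_connected:
  assumes mwo: "min_weakly_optimal A B y"
    and r: "r \<in> active_rows y" and r': "r' \<in> active_rows y"
  shows "(r', r) \<in> (support_graph y)\<^sup>*"
proof -
  have y: "y \<in> cone" "sub_eigen rho y"
    and y_min: "\<And>x. x \<in> cone \<Longrightarrow> sub_eigen rho x \<Longrightarrow> supp x \<subseteq> supp y \<Longrightarrow> supp x = supp y"
    using mwo unfolding min_weakly_optimal_iff by auto
  define D where "D = {q. (q, r) \<in> (support_graph y)\<^sup>*}"
  let ?x = "restrict_rows D y"
  have "r \<in> D" unfolding D_def by simp
  then have "?x \<in> cone" using restrict_rows_cone[OF y(1), of D] r by blast
  moreover have "sub_eigen rho ?x"
  proof (rule sub_eigen_restrict_rows[OF y])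
    fix i j assume "i \<in> active_rows y" "j \<in> supp y" "row_of j \<in> D" "A $$ (i,j) > 0"
    then have "(i, row_of j) \<in> support_graph y" "(row_of j, r) \<in> (support_graph y)\<^sup>*"
      unfolding support_graph_def D_def active_rows_def by auto
    then show "i \<in> D" unfolding D_def by (simp add: converse_rtrancl_into_rtrancl)
  qed
  moreover have "supp ?x \<subseteq> supp y" using supp_restrict_rows[OF y(1)] by auto
  ultimately have "supp ?x = supp y" using y_min by blast
  then show ?thesis
    using r' supp_restrict_rows[OF y(1), of D] unfolding D_def active_rows_def by blast
qed

definition shrink_row :: "nat \<Rightarrow> real \<Rightarrow> real vec \<Rightarrow> real vec" where
  "shrink_row b c x = vec n (\<lambda>j. if row_of j = b then c * x $ j else x $ j)"

lemma shrink_row: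
  fixes b :: nat
  assumes x: "x \<in> cone" and c: "0 < c" "c \<le> 1"
  defines "x' \<equiv> shrink_row b c x"
  shows "x' \<in> cone" "supp x' = supp x"
    and "\<And>i. i < m \<Longrightarrow> Bx i x' = (if i = b then c * Bx i x else Bx i x)"
    and "\<And>i. i < m \<Longrightarrow> Ax i x' \<le> Ax i x"
    and "\<And>i j. \<lbrakk>c < 1; i < m; j \<in> supp x; row_of j = b; A $$ (i,j) > 0\<rbrakk> \<Longrightarrow> Ax i x' < Ax i x"
proof -
  have x'_index: "j < n \<Longrightarrow> x' $ j = (if row_of j = b then c * x $ j else x $ j)" for j
    unfolding x'_def shrink_row_def by simp
  have x'_le: "j < n \<Longrightarrow> x' $ j \<le> x $ j" for j
    using x'_index coneD(4)[OF x] c by (simp add: mult_left_le_one_le)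
  show supp: "supp x' = supp x"
    unfolding supp_def using x'_index c coneD(2)[OF x] by (auto simp: x'_def shrink_row_def split: if_splits)
  obtain j where "j \<in> supp x" using supp_nonempty[OF x] by blast
  then show "x' \<in> cone"
    using x'_index coneD(4)[OF x] c supp mem_supp_iff[OF x]
    by (intro coneI[of _ j]) (auto simp: x'_def shrink_row_def supp_def)
  show "Bx i x' = (if i = b then c * Bx i x else Bx i x)" if "i < m" for i
    unfolding Bx_eq_sum_row_of[OF that] using x'_index by (auto simp: sum_distrib_left intro!: sum.cong)
  show "Ax i x' \<le> Ax i x" if "i < m" for i
    unfolding Ax_def using x'_le A_nonneg[OF that] by (auto intro!: sum_mono mult_left_mono)
  show "Ax i x' < Ax i x" if "c < 1" "i < m" "j \<in> supp x" "row_of j = b" "A $$ (i,j) > 0" for i j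
    unfolding Ax_def
  proof (rule sum_strict_mono_ex1)
    show "\<forall>k\<in>{..<n}. A $$ (i,k) * x' $ k \<le> A $$ (i,k) * x $ k"
      using x'_le A_nonneg[OF that(2)] by (auto intro: mult_left_mono)
    have "x' $ j < x $ j" using x'_index supp_lt[OF x] supp_pos[OF x] that by simp
    then show "\<exists>k\<in>{..<n}. A $$ (i,k) * x' $ k < A $$ (i,k) * x $ k"
      using that supp_lt[OF x] by (intro bexI[of _ j]) auto
  qed simp
qed

definition strict_rows :: "real vec \<Rightarrow> nat set" where
  "strict_rows x = {i. i < m \<and> Ax i x < rho * Bx i x}"

lemma strict_rows_subset_active_rows:
  assumes "x \<in> cone"
  shows "strict_rows x \<subseteq> active_rows x"
proof
  fix i assume "i \<in> strict_rows x"
  then have "i < m" "Ax i x < rho * Bx i x" unfolding strict_rows_def by auto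
  moreover have "Ax i x \<ge> 0" "Bx i x \<ge> 0"
    using Ax_nonneg Bx_nonneg coneD(3,2)[OF assms] \<open>i < m\<close> by auto
  ultimately have "Bx i x > 0" by (cases "Bx i x = 0") auto
  then show "i \<in> active_rows x" using Bx_pos_iff[OF assms \<open>i < m\<close>] by simp
qed

text \<open>Slack in a row spreads to every row having an edge into it: shrinking the columns owned
  by the slack row keeps it strict and makes the other row strict.\<close>

lemma strict_row_spreads:
  assumes x: "x \<in> cone" "sub_eigen rho x" and b: "b \<in> strict_rows x"
    and edge: "j \<in> supp x" "row_of j = b" "a < m" "A $$ (a,j) > 0"
  obtains x' where "x' \<in> cone" "supp x' = supp x" "sub_eigen rho x'"
    "insert a (strict_rows x) \<subseteq> strict_rows x'"
proof -
  have b_lt: "b < m" and slack: "Ax b x < rho * Bx b x" using b unfolding strict_rows_def by auto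
  have Axb: "Ax b x \<ge> 0" using Ax_nonneg[OF coneD(3,2)[OF x(1)] b_lt] .
  define D where "D = rho * Bx b x"
  have D: "D > 0" using slack Axb unfolding D_def by linarith
  define c where "c = (1 + Ax b x / D) / 2"
  have q: "0 \<le> Ax b x / D" "Ax b x / D < 1" using D Axb slack unfolding D_def by auto
  then have c: "0 < c" "c < 1" unfolding c_def by auto
  have "Ax b x = (Ax b x / D) * D" using D by simp
  also have "\<dots> < c * D" using q(2) unfolding c_def by (intro mult_strict_right_mono[OF _ D]) (simp add: field_simps)
  finally have c_slack: "Ax b x < c * (rho * Bx b x)" unfolding D_def .
  note x' = shrink_row[OF x(1) c(1) less_imp_le[OF c(2)], where b = b]
  let ?x' = "shrink_row b c x"
  have le: "Ax i ?x' \<le> rho * Bx i ?x'" if "i < m" "i \<noteq> b" for i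
    using x'(3,4) x(2) that unfolding sub_eigen_def by fastforce
  have strict_b: "Ax b ?x' < rho * Bx b ?x'"
    using x'(3,4)[OF b_lt] c_slack by (simp add: algebra_simps)
  have "sub_eigen rho ?x'"
    unfolding sub_eigen_def using le strict_b by (metis less_imp_le)
  moreover have "insert a (strict_rows x) \<subseteq> strict_rows ?x'"
  proof -
    have "a \<in> strict_rows ?x'"
    proof (cases "a = b")
      case False
      then show ?thesis
        using x'(3) x'(5)[OF c(2) edge(3,1,2,4)] x(2) edge(3) unfolding sub_eigen_def strict_rows_def by fastforce
    qed (use strict_b b_lt in \<open>simp add: strict_rows_def\<close>)
    moreover have "i \<in> strict_rows ?x'" if "i \<in> strict_rows x" for i
      using that strict_b x'(3,4) unfolding strict_rows_def by fastforce
    ultimately show ?thesis by blast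
  qed
  ultimately show thesis using that x'(1,2) by blast
qed

lemma min_weakly_optimal_strict_rows_grow:
  assumes mwo: "min_weakly_optimal A B y"
    and x: "x \<in> cone" "sub_eigen rho x" "supp x = supp y" and nonempty: "strict_rows x \<noteq> {}"
  obtains x' where "x' \<in> cone" "sub_eigen rho x'" "supp x' = supp y" "strict_rows x \<subset> strict_rows x'"
proof (cases "active_rows y \<subseteq> strict_rows x")
  case True
  obtain i where "i < m" "Bx i x > 0" "Ax i x = rho * Bx i x"
    using weakly_optimal_active_row_tight[OF x(1,2)] by blast
  then show thesis using True Bx_pos_iff[OF x(1)] x(3) unfolding strict_rows_def active_rows_def by auto
next
  case False
  have y: "y \<in> cone" using mwo unfolding min_weakly_optimal_iff by simp
  obtain a0 b0 where a0: "a0 \<in> active_rows y" "a0 \<notin> strict_rows x" and b0: "b0 \<in> strict_rows x"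
    using False nonempty by blast
  have "b0 \<in> active_rows y"
    using b0 strict_rows_subset_active_rows[OF x(1)] x(3) unfolding active_rows_def by auto
  with a0 have "(a0, b0) \<in> (support_graph y)\<^sup>*"
    by (intro min_weakly_optimal_strongly_connected[OF mwo])
  then obtain a b where ab: "(a, b) \<in> support_graph y" "a \<notin> strict_rows x" "b \<in> strict_rows x"
    using a0(2) b0 by (rule rtrancl_crosses_boundary)
  then obtain j where j: "j \<in> supp x" "row_of j = b" "A $$ (a,j) > 0" "a < m"
    unfolding support_graph_def x(3) using active_rows_lt[OF y] by auto
  obtain x' where "x' \<in> cone" "supp x' = supp x" "sub_eigen rho x'"
    "insert a (strict_rows x) \<subseteq> strict_rows x'"
    using strict_row_spreads[OF x(1,2) ab(3) j(1,2,4,3)] .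
  then show thesis using that ab(2) x(3) by blast
qed

lemma min_weakly_optimal_tight:
  assumes mwo: "min_weakly_optimal A B y" and i: "i < m"
  shows "Ax i y = rho * Bx i y"
proof -
  have y: "y \<in> cone" "sub_eigen rho y" using mwo unfolding min_weakly_optimal_iff by auto
  define V where "V = {x. x \<in> cone \<and> sub_eigen rho x \<and> supp x = supp y}"
  have finite_P: "finite (active_rows y)" unfolding active_rows_def using finite_supp by simp
  have strict_P: "x \<in> V \<Longrightarrow> strict_rows x \<subseteq> active_rows y" for x
    using strict_rows_subset_active_rows[of x] unfolding V_def active_rows_def by auto
  have "\<exists>x. x \<in> V \<and> (\<forall>x'. x' \<in> V \<longrightarrow> card (strict_rows x') \<le> card (strict_rows x))"
  proof (rule ex_has_greatest_nat[where k = y and b = "Suc (card (active_rows y))"])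
    show "y \<in> V" using y unfolding V_def by simp
    show "\<forall>x. x \<in> V \<longrightarrow> card (strict_rows x) < Suc (card (active_rows y))"
      using card_mono[OF finite_P strict_P] by (simp add: less_Suc_eq_le)
  qed
  then obtain x where x: "x \<in> V"
    and x_max: "\<And>x'. x' \<in> V \<Longrightarrow> card (strict_rows x') \<le> card (strict_rows x)"
    by blast
  have finite_strict: "finite (strict_rows x')" for x' unfolding strict_rows_def by simp
  have "strict_rows x = {}"
  proof (rule ccontr)
    assume nonempty: "strict_rows x \<noteq> {}"
    have "x \<in> cone" "sub_eigen rho x" "supp x = supp y" using x unfolding V_def by auto
    then obtain x' where x': "x' \<in> cone" "sub_eigen rho x'" "supp x' = supp y"
      "strict_rows x \<subset> strict_rows x'"
      using nonempty by (rule min_weakly_optimal_strict_rows_grow[OF mwo])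
    have "card (strict_rows x) < card (strict_rows x')" by (rule psubset_card_mono[OF finite_strict x'(4)])
    moreover have "x' \<in> V" using x' unfolding V_def by simp
    ultimately show False using x_max by fastforce
  qed
  then have "strict_rows y = {}" using x_max[of y] y finite_strict unfolding V_def by simp
  then show ?thesis using y(2) i unfolding strict_rows_def sub_eigen_def by force
qed

text \<open>Moving a weakly optimal \<open>y\<close> along a direction \<open>w\<close> with \<open>A w = \<rho> B w\<close> preserves weak
  optimality up to the point where the first coordinate vanishes; if \<open>w\<close> has a negative entry
  and leaves some coordinate of \<open>y\<close> untouched, this contradicts minimality.\<close>

lemma min_weakly_optimal_eigen_direction_nonneg:
  assumes mwo: "min_weakly_optimal A B y" and T: "T \<subset> supp y"
    and w: "w \<in> carrier_vec n" "\<And>j. j < n \<Longrightarrow> j \<notin> T \<Longrightarrow> w $ j = 0"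
      "\<And>i. i < m \<Longrightarrow> Ax i w = rho * Bx i w"
    and j: "j < n"
  shows "w $ j \<ge> 0"
proof (rule ccontr)
  assume neg: "\<not> w $ j \<ge> 0"
  have y: "y \<in> cone" "sub_eigen rho y"
    and y_min: "\<And>x. x \<in> cone \<Longrightarrow> sub_eigen rho x \<Longrightarrow> supp x \<subseteq> supp y \<Longrightarrow> supp x = supp y"
    using mwo unfolding min_weakly_optimal_iff by auto
  define Q where "Q = {j. j < n \<and> w $ j < 0}"
  have Q: "finite Q" "Q \<noteq> {}" unfolding Q_def using neg j by auto
  define t where "t = Min ((\<lambda>j. y $ j / (- w $ j)) ` Q)"
  have "t \<in> (\<lambda>j. y $ j / (- w $ j)) ` Q" unfolding t_def by (rule Min_in) (use Q in auto)
  then obtain j0 where j0: "j0 \<in> Q" "t = y $ j0 / (- w $ j0)" by blast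
  have t_le: "t \<le> y $ j / (- w $ j)" if "j \<in> Q" for j unfolding t_def using Q that by auto
  define x where "x = vec n (\<lambda>j. y $ j + t * w $ j)"
  have x_index: "j < n \<Longrightarrow> x $ j = y $ j + t * w $ j" for j unfolding x_def by simp
  have x_nonneg: "x $ j \<ge> 0" if "j < n" for j
  proof (cases "w $ j < 0")
    case True
    then have "t * (- w $ j) \<le> (y $ j / (- w $ j)) * (- w $ j)"
      using t_le[of j] that by (intro mult_right_mono) (auto simp: Q_def)
    then have "t * (- w $ j) \<le> y $ j" using True by simp
    then show ?thesis using x_index[OF that] by simp
  next
    case False
    have "t \<ge> 0" using j0 coneD(4)[OF y(1)] unfolding Q_def by (auto simp: divide_nonneg_neg)
    then show ?thesis using x_index[OF that] False coneD(4)[OF y(1) that] by simp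
  qed
  obtain k where k: "k \<in> supp y" "k \<notin> T" using T by blast
  then have "x $ k \<noteq> 0" using x_index w(2) supp_lt[OF y(1)] supp_pos[OF y(1)] by fastforce
  then have x: "x \<in> cone" using x_nonneg supp_lt[OF y(1) k(1)] by (intro coneI[of _ k]) (auto simp: x_def)
  have "sub_eigen rho x"
    using y(2) w(3) unfolding sub_eigen_def x_def Ax_add_scaled Bx_add_scaled by (simp add: algebra_simps)
  moreover have "supp x \<subseteq> supp y"
    using x_index w(2) T mem_supp_iff[OF x] mem_supp_iff[OF y(1)] by fastforce
  moreover have "j0 \<in> supp y" "j0 \<notin> supp x"
    using j0 x_index[of j0] w(2)[of j0] T mem_supp_iff[OF x] unfolding Q_def by auto
  ultimately show False using y_min[OF x] by blast
qed

lemma min_weakly_optimal_eigen_direction_zero: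
  assumes mwo: "min_weakly_optimal A B y" and T: "T \<subset> supp y"
    and v: "v \<in> carrier_vec n" "\<And>j. j < n \<Longrightarrow> j \<notin> T \<Longrightarrow> v $ j = 0"
      "\<And>i. i < m \<Longrightarrow> Ax i v = rho * Bx i v"
  shows "v = 0\<^sub>v n"
proof (rule eq_vecI)
  fix j assume "j < dim_vec (0\<^sub>v n)"
  then have j: "j < n" by simp
  have "(-1) \<cdot>\<^sub>v v \<in> carrier_vec n" "\<And>i. i < m \<Longrightarrow> Ax i ((-1) \<cdot>\<^sub>v v) = rho * Bx i ((-1) \<cdot>\<^sub>v v)"
    using v Ax_smult[where c = "-1" and x = v] Bx_smult[where c = "-1" and x = v] by auto
  then have "((-1) \<cdot>\<^sub>v v) $ j \<ge> 0"
    using v(1,2) j by (intro min_weakly_optimal_eigen_direction_nonneg[OF mwo T]) auto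
  moreover have "v $ j \<ge> 0" by (rule min_weakly_optimal_eigen_direction_nonneg[OF mwo T v j])
  ultimately show "v $ j = 0\<^sub>v n $ j" using j v(1) by simp
qed (use v in simp)

lemma small_perturbation_same_supp:
  assumes y: "y \<in> cone" and h: "\<And>j. j < n \<Longrightarrow> j \<notin> supp y \<Longrightarrow> h $ j = 0"
  obtains eps where "eps > 0" "vec n (\<lambda>j. y $ j + eps * h $ j) \<in> cone"
    "supp (vec n (\<lambda>j. y $ j + eps * h $ j)) = supp y"
proof -
  define mu where "mu = Min ((\<lambda>j. y $ j) ` supp y)"
  have mu: "0 < mu" "\<And>j. j \<in> supp y \<Longrightarrow> mu \<le> y $ j"
    unfolding mu_def using finite_supp supp_nonempty[OF y] supp_pos[OF y] by auto
  define H where "H = (\<Sum>j<n. \<bar>h $ j\<bar>) + 1"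
  have H: "\<bar>h $ j\<bar> < H" if "j < n" for j
    using member_le_sum[of j "{..<n}" "\<lambda>j. \<bar>h $ j\<bar>"] that unfolding H_def by auto
  have "H > 0" using H[of 0] cols_pos by linarith
  define eps where "eps = mu / H"
  have eps: "eps > 0" unfolding eps_def using mu \<open>H > 0\<close> by simp
  define x where "x = vec n (\<lambda>j. y $ j + eps * h $ j)"
  have x_index: "j < n \<Longrightarrow> x $ j = y $ j + eps * h $ j" for j unfolding x_def by simp
  have x_pos: "x $ j > 0" if "j \<in> supp y" for j
  proof -
    have "j < n" using that supp_lt[OF y] by auto
    have "eps * \<bar>h $ j\<bar> < eps * H" using H[OF \<open>j < n\<close>] eps by simp
    also have "\<dots> = mu" unfolding eps_def using \<open>H > 0\<close> by simp
    finally have "eps * \<bar>h $ j\<bar> < mu" .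
    moreover have "- (eps * h $ j) \<le> eps * \<bar>h $ j\<bar>"
      using eps abs_ge_minus_self[of "eps * h $ j"] by (simp add: abs_mult)
    ultimately show ?thesis using x_index[OF \<open>j < n\<close>] mu(2)[OF that] by linarith
  qed
  have x_zero: "x $ j = 0" if "j < n" "j \<notin> supp y" for j
    using x_index h that mem_supp_iff[OF y] by auto
  have x_nonneg: "x $ j \<ge> 0" if "j < n" for j
    using x_pos[of j] x_zero[OF that] by (cases "j \<in> supp y") auto
  obtain j where "j \<in> supp y" using supp_nonempty[OF y] by auto
  then have x: "x \<in> cone"
    using x_nonneg x_pos[of j] supp_lt[OF y] by (intro coneI[of _ j]) (auto simp: x_def)
  moreover have "supp x = supp y" using x_pos x_zero mem_supp_iff[OF x] supp_lt[OF y] by force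
  ultimately show thesis using that eps unfolding x_def by blast
qed

text \<open>A direction \<open>h\<close> on the support that is strictly improving in every active row would
  produce a weakly optimal vector without tight active row.\<close>

lemma weakly_optimal_no_improving_direction:
  assumes y: "y \<in> cone" "sub_eigen rho y"
    and h: "\<And>j. j < n \<Longrightarrow> j \<notin> supp y \<Longrightarrow> h $ j = 0"
    and improving: "\<And>i. i \<in> active_rows y \<Longrightarrow> Ax i h < rho * Bx i h"
  shows False
proof -
  obtain eps where eps: "eps > 0" and x: "vec n (\<lambda>j. y $ j + eps * h $ j) \<in> cone"
    and supp_x: "supp (vec n (\<lambda>j. y $ j + eps * h $ j)) = supp y"
    using small_perturbation_same_supp[OF y(1) h] by blast
  define x where "x = vec n (\<lambda>j. y $ j + eps * h $ j)"
  have diff: "Ax i x - rho * Bx i x = (Ax i y - rho * Bx i y) + eps * (Ax i h - rho * Bx i h)" for i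
    unfolding x_def Ax_add_scaled Bx_add_scaled by (simp add: algebra_simps)
  have "sub_eigen rho x" unfolding sub_eigen_def
  proof (intro allI impI)
    fix i assume i: "i < m"
    have "eps * (Ax i h - rho * Bx i h) \<le> 0"
    proof (cases "i \<in> active_rows y")
      case False
      then show ?thesis using inactive_row_annihilates[OF y i False h] by simp
    qed (use improving eps in \<open>auto simp: mult_le_0_iff less_imp_le\<close>)
    then show "Ax i x \<le> rho * Bx i x" using diff[of i] y(2) i unfolding sub_eigen_def by force
  qed
  then obtain i where i: "i < m" "Bx i x > 0" "Ax i x = rho * Bx i x"
    using weakly_optimal_active_row_tight x unfolding x_def by blast
  then have "i \<in> active_rows y" using Bx_pos_iff x supp_x unfolding x_def active_rows_def by auto
  then have "eps * (Ax i h - rho * Bx i h) < 0"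
    using improving eps by (simp add: mult_pos_neg)
  moreover have "Ax i y \<le> rho * Bx i y" using y(2) i(1) unfolding sub_eigen_def by simp
  ultimately show False using diff[of i] i(3) by linarith
qed

lemma Ax_minus_Bx: "(\<Sum>j<n. (A $$ (i,j) - rho * B $$ (i,j)) * v $ j) = Ax i v - rho * Bx i v"
  unfolding Ax_def Bx_def by (simp add: algebra_simps sum_subtractf sum_distrib_left)

text \<open>Choosing one column per active row gives a square system for \<open>A - \<rho> B\<close>; if some active
  row owned two support columns, this system would live on a proper subset of the support
  and both of its alternatives are excluded above.\<close>

lemma min_weakly_optimal_inj_row_of:
  assumes mwo: "min_weakly_optimal A B y"
  shows "inj_on row_of (supp y)"
proof (rule ccontr)
  assume not_inj: "\<not> inj_on row_of (supp y)"
  have y: "y \<in> cone" "sub_eigen rho y" using mwo unfolding min_weakly_optimal_iff by auto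
  obtain rep where rep: "\<And>i. i \<in> active_rows y \<Longrightarrow> rep i \<in> supp y"
      "\<And>i. i \<in> active_rows y \<Longrightarrow> row_of (rep i) = i" and T: "rep ` active_rows y \<subset> supp y"
    using not_inj_on_transversal[OF not_inj] unfolding active_rows_def by blast
  define T where "T = rep ` active_rows y"
  have T_sub: "T \<subseteq> supp y" and T_n: "T \<subseteq> {..<n}"
    using T supp_lt[OF y(1)] unfolding T_def by auto
  have rep_T: "rep i \<in> T" if "i \<in> active_rows y" for i using that unfolding T_def by simp
  define a where "a q j = A $$ (row_of q, j) - rho * B $$ (row_of q, j)" for q j
  have rows: "Ax i v - rho * Bx i v = (\<Sum>j<n. a (rep i) j * v $ j)" if "i \<in> active_rows y" for i v
    using rep[OF that] Ax_minus_Bx unfolding a_def by simp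
  from supported_system_singular_or_solvable[OF T_n, of a] show False
  proof
    assume "\<exists>v\<in>carrier_vec n. v \<noteq> 0\<^sub>v n \<and> (\<forall>j<n. j \<notin> T \<longrightarrow> v $ j = 0)
      \<and> (\<forall>q\<in>T. (\<Sum>j<n. a q j * v $ j) = 0)"
    then obtain v where singular: "v \<in> carrier_vec n" "v \<noteq> 0\<^sub>v n" "\<forall>j<n. j \<notin> T \<longrightarrow> v $ j = 0"
      "\<forall>q\<in>T. (\<Sum>j<n. a q j * v $ j) = 0" by blast
    have "Ax i v = rho * Bx i v" if "i < m" for i
    proof (cases "i \<in> active_rows y")
      case True
      then show ?thesis using rows[OF True, of v] singular(4) rep_T[OF True] by simp
    next
      case False
      have "v $ j = 0" if "j < n" "j \<notin> supp y" for j using that singular(3) T_sub by auto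
      then show ?thesis using inactive_row_annihilates[OF y \<open>i < m\<close> False] by simp
    qed
    then show False
      using min_weakly_optimal_eigen_direction_zero[OF mwo T[folded T_def] singular(1)] singular(2,3) by auto
  next
    assume "\<forall>c. \<exists>h\<in>carrier_vec n. (\<forall>j<n. j \<notin> T \<longrightarrow> h $ j = 0)
      \<and> (\<forall>q\<in>T. (\<Sum>j<n. a q j * h $ j) = c q)"
    from this[rule_format, of "\<lambda>_. -1"]
    obtain h where solvable: "h \<in> carrier_vec n" "\<forall>j<n. j \<notin> T \<longrightarrow> h $ j = 0"
      "\<forall>q\<in>T. (\<Sum>j<n. a q j * h $ j) = -1" by blast
    show False
    proof (rule weakly_optimal_no_improving_direction[OF y])
      show "h $ j = 0" if "j < n" "j \<notin> supp y" for j using that solvable(2) T_sub by auto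
      show "Ax i h < rho * Bx i h" if "i \<in> active_rows y" for i
        using rows[OF that, of h] solvable(3) rep_T[OF that] by simp
    qed
  qed
qed

lemma zero_rows_eq:
  assumes "S \<subseteq> {..<n}"
  shows "zero_rows B S = {0..<m} - row_of ` S"
  using assms B_carrier row_of_lt pivot_pos B_index
  unfolding zero_rows_def by (fastforce simp: subset_iff)

end

text \<open>Columns of
  \<open>S\<close> and rows of \<open>R = row_of ` S\<close> are enumerated increasingly by \<open>pick\<close>; then \<open>BS\<close> is a
  monomial matrix whose nonzero entry in column \<open>b\<close> lies in row \<open>row_idx b\<close>.\<close>

locale wn_support = wn_pair +
  fixes S :: "nat set"
  assumes S_sub: "S \<subseteq> {..<n}" and S_nonempty: "S \<noteq> {}" and inj_row_of: "inj_on row_of S"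
begin

definition R where "R = {0..<dim_row B} - zero_rows B S"
definition l where "l = card S"
definition col_at where "col_at b = pick S b"
definition row_at where "row_at a = pick R a"
definition row_idx where "row_idx b = card {i \<in> R. i < row_of (col_at b)}"
definition BS where "BS = submatrix B R S"
definition AS where "AS = submatrix A R S"
definition BS_inv where "BS_inv = the (mat_inverse BS)"
definition CS where "CS = BS_inv * AS"

lemma C_mat_eq: "supp w = S \<Longrightarrow> C_mat A B w = CS"
  unfolding C_mat_def CS_def BS_inv_def BS_def AS_def R_def Let_def by simp

lemma finite_S: "finite S" using S_sub finite_subset by blast

lemma l_pos: "l > 0" unfolding l_def using finite_S S_nonempty by (simp add: card_gt_0_iff)

lemma R_eq: "R = row_of ` S"
  unfolding R_def using zero_rows_eq[OF S_sub] B_carrier row_of_lt S_sub by auto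

lemma finite_R: "finite R" unfolding R_eq using finite_S by simp

lemma card_R: "card R = l" unfolding R_eq l_def using card_image[OF inj_row_of] .

lemma R_lt: "i \<in> R \<Longrightarrow> i < m" unfolding R_def using B_carrier by auto

lemma submatrix_carrier:
  assumes "M \<in> carrier_mat m n"
  shows "submatrix M R S \<in> carrier_mat l l"
    "{i. i < dim_row M \<and> i \<in> R} = R" "{j. j < dim_col M \<and> j \<in> S} = S"
proof -
  show rows: "{i. i < dim_row M \<and> i \<in> R} = R" and cols: "{j. j < dim_col M \<and> j \<in> S} = S"
    using assms R_lt S_sub by auto
  show "submatrix M R S \<in> carrier_mat l l"
    by (rule carrier_matI) (simp_all add: dim_submatrix rows cols card_R l_def)
qed

lemma BS_carrier: "BS \<in> carrier_mat l l" and AS_carrier: "AS \<in> carrier_mat l l"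
  unfolding BS_def AS_def using submatrix_carrier B_carrier A_carrier by auto

lemma bij_col_at: "bij_betw col_at {..<l} S"
  unfolding col_at_def l_def using bij_betw_pick[OF finite_S] by simp

lemma bij_row_at: "bij_betw row_at {..<l} R"
  unfolding row_at_def card_R[symmetric] using bij_betw_pick[OF finite_R] by simp

lemma col_at: "b < l \<Longrightarrow> col_at b \<in> S" and col_at_lt: "b < l \<Longrightarrow> col_at b < n"
  using bij_col_at S_sub unfolding bij_betw_def by auto

lemma col_at_inj: "b < l \<Longrightarrow> b' < l \<Longrightarrow> col_at b = col_at b' \<Longrightarrow> b = b'"
  using bij_col_at unfolding bij_betw_def inj_on_def by auto

lemma col_at_surj: "j \<in> S \<Longrightarrow> \<exists>b<l. col_at b = j"
  using bij_col_at unfolding bij_betw_def by (metis imageE lessThan_iff)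

lemma row_at: "a < l \<Longrightarrow> row_at a \<in> R"
  using bij_row_at unfolding bij_betw_def by auto

lemma row_at_inj: "a < l \<Longrightarrow> a' < l \<Longrightarrow> row_at a = row_at a' \<Longrightarrow> a = a'"
  using bij_row_at unfolding bij_betw_def inj_on_def by auto

lemma row_at_surj: "i \<in> R \<Longrightarrow> \<exists>a<l. row_at a = i"
  using bij_row_at unfolding bij_betw_def by (metis imageE lessThan_iff)

lemma row_idx: "b < l \<Longrightarrow> row_idx b < l" "b < l \<Longrightarrow> row_at (row_idx b) = row_of (col_at b)"
proof -
  assume b: "b < l"
  have own: "row_of (col_at b) \<in> R" unfolding R_eq using col_at[OF b] by simp
  then have "{i \<in> R. i < row_of (col_at b)} \<subset> R" by auto
  then show "row_idx b < l" unfolding row_idx_def card_R[symmetric] by (rule psubset_card_mono[OF finite_R])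
  show "row_at (row_idx b) = row_of (col_at b)"
    unfolding row_at_def row_idx_def using pick_card_in_set[OF own] .
qed

lemma row_idx_inj: "b < l \<Longrightarrow> b' < l \<Longrightarrow> row_idx b = row_idx b' \<Longrightarrow> b = b'"
  using row_idx(2) inj_onD[OF inj_row_of _ col_at col_at] col_at_inj by metis

lemma submatrix_index:
  assumes "M \<in> carrier_mat m n" "a < l" "b < l"
  shows "submatrix M R S $$ (a,b) = M $$ (row_at a, col_at b)"
  unfolding row_at_def col_at_def
  by (rule submatrix_index) (use assms submatrix_carrier[OF assms(1)] card_R l_def in auto)

lemma BS_index:
  assumes "a < l" "b < l"
  shows "BS $$ (a,b) = (if a = row_idx b then pivot (col_at b) else 0)"
proof -
  have "BS $$ (a,b) = (if row_at a = row_of (col_at b) then pivot (col_at b) else 0)"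
    unfolding BS_def submatrix_index[OF B_carrier assms]
    using B_index col_at_lt[OF assms(2)] R_lt[OF row_at[OF assms(1)]] by simp
  also have "(row_at a = row_of (col_at b)) = (a = row_idx b)"
    using row_idx[OF assms(2)] row_at_inj[OF assms(1) row_idx(1)[OF assms(2)]] by auto
  finally show ?thesis .
qed

lemma BS_mult_index:
  assumes b: "b < l" and v: "v \<in> carrier_vec l"
  shows "(BS *\<^sub>v v) $ row_idx b = pivot (col_at b) * v $ b"
proof -
  have "(BS *\<^sub>v v) $ row_idx b = (\<Sum>b'<l. BS $$ (row_idx b, b') * v $ b')"
    using BS_carrier v row_idx(1)[OF b] by (simp add: scalar_prod_def atLeast0LessThan)
  also have "\<dots> = (\<Sum>b'<l. if b' = b then pivot (col_at b) * v $ b else 0)"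
    using BS_index row_idx(1)[OF b] row_idx_inj[OF b] by (intro sum.cong) auto
  finally show ?thesis using b by simp
qed

lemma BS_inverse: "BS_inv \<in> carrier_mat l l" "BS * BS_inv = 1\<^sub>m l" "BS_inv * BS = 1\<^sub>m l"
proof -
  have "det BS \<noteq> 0"
  proof
    assume "det BS = 0"
    then obtain v where v: "v \<in> carrier_vec l" "v \<noteq> 0\<^sub>v l" "BS *\<^sub>v v = 0\<^sub>v l"
      using det_0_iff_vec_prod_zero_field[OF BS_carrier] by auto
    have "v $ b = 0" if "b < l" for b
      using BS_mult_index[OF that v(1)] v(3) row_idx(1)[OF that] pivot_pos[OF col_at_lt[OF that]] by simp
    then have "v = 0\<^sub>v l" using v(1) by (intro eq_vecI) auto
    with v(2) show False by simp
  qed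
  then have "BS \<in> Units (ring_mat TYPE(real) l ())" by (rule det_non_zero_imp_unit[OF BS_carrier])
  then have "mat_inverse BS = Some BS_inv"
    using mat_inverse(1)[OF BS_carrier, of "()"] unfolding BS_inv_def by (cases "mat_inverse BS") auto
  from mat_inverse(2)[OF BS_carrier this]
  show "BS_inv \<in> carrier_mat l l" "BS * BS_inv = 1\<^sub>m l" "BS_inv * BS = 1\<^sub>m l" by auto
qed

lemma CS_carrier: "CS \<in> carrier_mat l l"
  unfolding CS_def using BS_inverse(1) AS_carrier by simp

lemma BS_mult_CS: "BS * CS = AS"
proof -
  have "BS * CS = (BS * BS_inv) * AS"
    unfolding CS_def using assoc_mult_mat[OF BS_carrier BS_inverse(1) AS_carrier] by simp
  then show ?thesis using BS_inverse(2) AS_carrier by simp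
qed

lemma CS_index:
  assumes b: "b < l" and c: "c < l"
  shows "CS $$ (b,c) = A $$ (row_of (col_at b), col_at c) / pivot (col_at b)"
proof -
  have "AS $$ (row_idx b, c) = (BS *\<^sub>v col CS c) $ row_idx b"
    using BS_carrier CS_carrier row_idx(1)[OF b] c by (simp flip: BS_mult_CS)
  also have "\<dots> = pivot (col_at b) * CS $$ (b,c)"
    using BS_mult_index[OF b, of "col CS c"] CS_carrier b c by simp
  finally show ?thesis
    using submatrix_index[OF A_carrier row_idx(1)[OF b] c] row_idx(2)[OF b]
      pivot_pos[OF col_at_lt[OF b]] unfolding AS_def by (simp add: field_simps)
qed

lemma CS_nonneg: "b < l \<Longrightarrow> c < l \<Longrightarrow> CS $$ (b,c) \<ge> 0"
  using CS_index A_nonneg row_of_lt col_at_lt pivot_pos by (simp add: less_imp_le)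

lemma CS_pos_iff:
  assumes "b < l" "c < l"
  shows "CS $$ (b,c) > 0 \<longleftrightarrow> A $$ (row_of (col_at b), col_at c) > 0"
  using pivot_pos[OF col_at_lt[OF assms(1)]] unfolding CS_index[OF assms] by (simp add: zero_less_divide_iff)

lemma restrict_supp_eq: "supp w = S \<Longrightarrow> restrict_supp w = vec l (\<lambda>b. w $ col_at b)"
  unfolding restrict_supp_def l_def col_at_def by simp

lemma submatrix_mult_restrict_supp:
  assumes w: "supp w = S" "dim_vec w = n" and M: "M \<in> carrier_mat m n" and a: "a < l"
  shows "(submatrix M R S *\<^sub>v restrict_supp w) $ a = (\<Sum>j<n. M $$ (row_at a, j) * w $ j)"
proof -
  have "(submatrix M R S *\<^sub>v restrict_supp w) $ a = (\<Sum>b<l. M $$ (row_at a, col_at b) * w $ col_at b)"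
    using submatrix_carrier(1)[OF M] a submatrix_index[OF M a] unfolding restrict_supp_eq[OF w(1)]
    by (simp add: scalar_prod_def atLeast0LessThan)
  also have "\<dots> = (\<Sum>j\<in>S. M $$ (row_at a, j) * w $ j)"
    by (rule sum.reindex_bij_betw[OF bij_col_at])
  also have "\<dots> = (\<Sum>j<n. M $$ (row_at a, j) * w $ j)"
    using S_sub w unfolding supp_def by (intro sum.mono_neutral_left) auto
  finally show ?thesis .
qed

lemma CS_eigen_iff:
  assumes w: "supp w = S" "dim_vec w = n"
  shows "CS *\<^sub>v restrict_supp w = lam \<cdot>\<^sub>v restrict_supp w \<longleftrightarrow> (\<forall>i\<in>R. Ax i w = lam * Bx i w)"
proof -
  let ?z = "restrict_supp w"
  have z: "?z \<in> carrier_vec l" unfolding restrict_supp_eq[OF w(1)] by simp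
  have "CS *\<^sub>v ?z = lam \<cdot>\<^sub>v ?z \<longleftrightarrow> AS *\<^sub>v ?z = lam \<cdot>\<^sub>v (BS *\<^sub>v ?z)"
  proof
    assume "CS *\<^sub>v ?z = lam \<cdot>\<^sub>v ?z"
    then show "AS *\<^sub>v ?z = lam \<cdot>\<^sub>v (BS *\<^sub>v ?z)"
      using assoc_mult_mat_vec[OF BS_carrier CS_carrier z] BS_carrier z
      by (simp add: BS_mult_CS mult_mat_vec)
  next
    assume "AS *\<^sub>v ?z = lam \<cdot>\<^sub>v (BS *\<^sub>v ?z)"
    then have "BS_inv *\<^sub>v (AS *\<^sub>v ?z) = lam \<cdot>\<^sub>v ((BS_inv * BS) *\<^sub>v ?z)"
      using BS_inverse(1) BS_carrier z by (simp add: mult_mat_vec assoc_mult_mat_vec)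
    then show "CS *\<^sub>v ?z = lam \<cdot>\<^sub>v ?z"
      using BS_inverse(3) assoc_mult_mat_vec[OF BS_inverse(1) AS_carrier z] z
      unfolding CS_def by simp
  qed
  also have "\<dots> \<longleftrightarrow> (\<forall>a<l. Ax (row_at a) w = lam * Bx (row_at a) w)"
    using submatrix_mult_restrict_supp[OF w A_carrier] submatrix_mult_restrict_supp[OF w B_carrier]
      AS_carrier BS_carrier z
    unfolding vec_eq_iff AS_def BS_def Ax_def Bx_def by auto
  also have "\<dots> \<longleftrightarrow> (\<forall>i\<in>R. Ax i w = lam * Bx i w)"
    using row_at row_at_surj by blast
  finally show ?thesis .
qed

abbreviation CS_graph where
  "CS_graph \<equiv> {(b, c). b < dim_row CS \<and> c < dim_row CS \<and> CS $$ (b, c) > 0}"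

lemma CS_graph_iff: "(b, c) \<in> CS_graph \<longleftrightarrow> b < l \<and> c < l \<and> A $$ (row_of (col_at b), col_at c) > 0"
  using CS_carrier CS_pos_iff by auto

lemma irreducible_CS_if_strongly_connected:
  assumes connected: "\<And>i i'. i \<in> R \<Longrightarrow> i' \<in> R \<Longrightarrow> (i, i') \<in> G\<^sup>*"
    and edges: "\<And>i i'. (i, i') \<in> G \<Longrightarrow> i \<in> R \<and> (\<exists>j\<in>S. row_of j = i' \<and> A $$ (i,j) > 0)"
  shows "irreducible_mat CS"
proof -
  define idx where "idx = inv_into {..<l} (\<lambda>b. row_of (col_at b))"
  have "inj_on (\<lambda>b. row_of (col_at b)) {..<l}"
  proof (rule inj_onI)
    fix b b' assume "b \<in> {..<l}" "b' \<in> {..<l}" "row_of (col_at b) = row_of (col_at b')"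
    then show "b = b'" using inj_onD[OF inj_row_of _ col_at col_at] col_at_inj by simp
  qed
  then have idx: "idx (row_of (col_at b)) = b" if "b < l" for b
    unfolding idx_def using inv_into_f_f[OF _ lessThan_iff[THEN iffD2, OF that]] by blast
  have edge: "(idx i, idx i') \<in> CS_graph" if e: "(i, i') \<in> G" for i i'
  proof -
    obtain j where j: "j \<in> S" "row_of j = i'" "A $$ (i,j) > 0" "i \<in> R" using edges[OF e] by blast
    obtain b where b: "b < l" "row_of (col_at b) = i" using j(4) col_at_surj unfolding R_eq by blast
    obtain c where c: "c < l" "col_at c = j" using col_at_surj[OF j(1)] by blast
    show ?thesis using CS_graph_iff b c j idx by auto
  qed
  show ?thesis unfolding irreducible_mat_def
  proof (intro allI impI)
    fix b c assume "b < dim_row CS" "c < dim_row CS"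
    then have bc: "b < l" "c < l" using CS_carrier by auto
    then have "(row_of (col_at b), row_of (col_at c)) \<in> G\<^sup>*"
      using connected col_at unfolding R_eq by blast
    then have "(idx (row_of (col_at b)), idx (row_of (col_at c))) \<in> CS_graph\<^sup>*"
      by (rule rtrancl_map[where f = idx]) (rule edge)
    then show "(b, c) \<in> CS_graph\<^sup>*" using idx bc by simp
  qed
qed

lemma irreducible_CS_crossing:
  assumes irr: "irreducible_mat CS" and T: "T \<subseteq> S" "T \<noteq> {}" "T \<noteq> S"
  obtains j j' where "j \<in> S - T" "j' \<in> T" "A $$ (row_of j, j') > 0"
proof -
  define X where "X = {b. b < l \<and> col_at b \<in> T}"
  obtain j0 j1 where "j0 \<in> S" "j0 \<notin> T" "j1 \<in> T" using T by blast
  then obtain b0 c0 where "b0 < l" "b0 \<notin> X" "c0 < l" "c0 \<in> X"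
    using col_at_surj T(1) unfolding X_def by blast
  then have "(b0, c0) \<in> CS_graph\<^sup>*" using irr CS_carrier unfolding irreducible_mat_def by auto
  from rtrancl_crosses_boundary[OF this \<open>b0 \<notin> X\<close> \<open>c0 \<in> X\<close>] obtain b c
    where "(b, c) \<in> CS_graph" "b \<notin> X" "c \<in> X" .
  then show thesis using that[of "col_at b" "col_at c"] CS_graph_iff col_at unfolding X_def by auto
qed

end

context wn_pair
begin

lemma mult_eq_smult_iff:
  assumes "dim_vec x = n"
  shows "A *\<^sub>v x = lam \<cdot>\<^sub>v (B *\<^sub>v x) \<longleftrightarrow> (\<forall>i<m. Ax i x = lam * Bx i x)"
  using assms A_carrier B_carrier mult_A_index mult_B_index by (auto simp: vec_eq_iff)

lemma r_fun_eq_if_eigen: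
  assumes x: "x \<in> cone" and eigen: "\<And>i. i < m \<Longrightarrow> Ax i x = lam * Bx i x" and "lam \<ge> 0"
  shows "r_fun A B x = ereal lam"
proof (rule antisym)
  show "r_fun A B x \<le> ereal lam"
    using r_fun_le_iff[OF coneD(1,3)[OF x] \<open>lam \<ge> 0\<close>] eigen unfolding sub_eigen_def by simp
  obtain i where i: "i < m" "Bx i x > 0"
    using supp_nonempty[OF x] Bx_pos_iff[OF x] active_rows_lt[OF x] unfolding active_rows_def by blast
  then have "ratio ((A *\<^sub>v x) $ i) ((B *\<^sub>v x) $ i) = ereal lam"
    using eigen[OF i(1)] mult_A_index mult_B_index coneD(2)[OF x] by (simp add: ratio_def)
  then show "ereal lam \<le> r_fun A B x" using ratio_le_r_fun[OF i(1), where x = x] by simp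
qed

lemma E_setD:
  assumes "w \<in> E_set A B"
  shows "w \<in> prob_vecs n" "w \<in> cone" "card (supp w) \<le> m" "card (zero_rows B (supp w)) = m - card (supp w)"
    "\<And>i j. i \<in> zero_rows B (supp w) \<Longrightarrow> j \<in> supp w \<Longrightarrow> A $$ (i,j) = 0"
    "irreducible_mat (C_mat A B w)" "PF_eigenvector (C_mat A B w) (restrict_supp w)"
  using assms A_carrier prob_vecs_subset_cone unfolding E_set_def Let_def by auto

text \<open>Condition (ii) forces the support columns to belong to distinct rows of \<open>B\<close>.\<close>

lemma E_set_wn_support:
  assumes w: "w \<in> E_set A B"
  shows "wn_support A B m n (supp w)"
proof
  let ?S = "supp w"
  show S: "?S \<subseteq> {..<n}" using supp_lt[OF E_setD(2)[OF w]] by auto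
  show "?S \<noteq> {}" using supp_nonempty[OF E_setD(2)[OF w]] .
  have "row_of ` ?S \<subseteq> {0..<m}" using row_of_lt S by auto
  then have "card (zero_rows B ?S) = m - card (row_of ` ?S)"
    unfolding zero_rows_eq[OF S] by (simp add: card_Diff_subset finite_supp)
  then have "card (row_of ` ?S) = card ?S"
    using E_setD(3,4)[OF w] card_image_le[OF finite_supp, of row_of w] by linarith
  then show "inj_on row_of ?S" using eq_card_imp_inj_on[OF finite_supp] by simp
qed

lemma min_weakly_optimal_in_E_set:
  assumes mwo: "min_weakly_optimal A B y" and y_prob: "y \<in> prob_vecs n"
  shows "y \<in> E_set A B"
proof -
  have y: "y \<in> cone" "sub_eigen rho y" using mwo unfolding min_weakly_optimal_iff by auto
  interpret wn_support A B m n "supp y"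
    using supp_lt[OF y(1)] supp_nonempty[OF y(1)] min_weakly_optimal_inj_row_of[OF mwo]
    by unfold_locales auto
  let ?z = "restrict_supp y"
  have R_active: "R = active_rows y" unfolding R_eq active_rows_def ..
  have zero_rows: "zero_rows B (supp y) = {0..<m} - R" using zero_rows_eq[OF S_sub] R_eq by simp
  have "card R \<le> m" using R_lt by (intro card_mono[of "{..<m}", simplified]) auto
  then have card_S: "card (supp y) \<le> m" using card_R l_def by simp
  have card_zero_rows: "card (zero_rows B (supp y)) = m - card (supp y)"
    using zero_rows R_lt card_R finite_R unfolding l_def by (simp add: card_Diff_subset subset_iff)
  have A_zero: "A $$ (i,j) = 0" if "i \<in> zero_rows B (supp y)" "j \<in> supp y" for i j
    using inactive_row_A_zero[OF y _ _ that(2)] that(1) zero_rows R_active by auto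
  have irr: "irreducible_mat CS"
    by (rule irreducible_CS_if_strongly_connected[where G = "support_graph y"])
      (use min_weakly_optimal_strongly_connected[OF mwo] R_active in \<open>auto simp: support_graph_def\<close>)
  have z: "?z \<in> carrier_vec l" "\<And>b. b < l \<Longrightarrow> ?z $ b > 0"
    using restrict_supp_eq[OF refl] col_at supp_pos[OF y(1)] by auto
  have Cz: "CS *\<^sub>v ?z = rho \<cdot>\<^sub>v ?z"
    using CS_eigen_iff[OF refl coneD(2)[OF y(1)]] min_weakly_optimal_tight[OF mwo] R_lt by blast
  have "spec_rad CS = rho"
    by (rule spec_rad_eq_of_pos_eigenvector[OF CS_carrier CS_nonneg l_pos z Cz rho_nonneg])
  moreover have "?z \<noteq> 0\<^sub>v l" using z(2)[OF l_pos] l_pos by auto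
  ultimately have "PF_eigenvector CS ?z"
    using z Cz CS_carrier unfolding PF_eigenvector_def nonneg_vec_def by (auto simp: less_imp_le)
  moreover have "C_mat A B y = CS" by (rule C_mat_eq) simp
  ultimately show ?thesis
    unfolding E_set_def Let_def
    using y_prob A_carrier card_S card_zero_rows A_zero irr z(2)[unfolded l_def] by auto
qed

lemma E_set_eigen:
  assumes w: "w \<in> E_set A B"
  shows "A *\<^sub>v w = spec_rad (C_mat A B w) \<cdot>\<^sub>v (B *\<^sub>v w)"
    "ereal (spec_rad (C_mat A B w)) = r_fun A B w"
proof -
  interpret wn_support A B m n "supp w" by (rule E_set_wn_support[OF w])
  note w_cone = E_setD(2)[OF w]
  let ?z = "restrict_supp w" and ?r = "spec_rad CS"
  have z: "?z \<in> carrier_vec l" "\<And>b. b < l \<Longrightarrow> ?z $ b > 0"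
    using restrict_supp_eq[OF refl] col_at supp_pos[OF w_cone] by auto
  have Cz: "CS *\<^sub>v ?z = ?r \<cdot>\<^sub>v ?z"
    using E_setD(7)[OF w] unfolding C_mat_eq[OF refl] PF_eigenvector_def by simp
  have rows: "Ax i w = ?r * Bx i w" if "i < m" for i
  proof (cases "i \<in> R")
    case True
    then show ?thesis using CS_eigen_iff[OF refl coneD(2)[OF w_cone]] Cz by blast
  next
    case False
    then have "i \<in> zero_rows B (supp w)" "i \<notin> active_rows w"
      using that zero_rows_eq[OF S_sub] R_eq unfolding active_rows_def by auto
    then show ?thesis
      using E_setD(5)[OF w] Bx_pos_iff[OF w_cone that] Bx_nonneg[OF coneD(3,2)[OF w_cone] that]
        mem_supp_iff[OF w_cone]
      unfolding Ax_def by (auto intro!: sum.neutral)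
  qed
  have "?r \<ge> 0"
    using spectral_radius_mem_max(1)[of "map_mat complex_of_real CS" l] CS_carrier l_pos
    unfolding spec_rad_def by auto
  then show "ereal (spec_rad (C_mat A B w)) = r_fun A B w"
    using r_fun_eq_if_eigen[OF w_cone rows] C_mat_eq[OF refl] by simp
  show "A *\<^sub>v w = spec_rad (C_mat A B w) \<cdot>\<^sub>v (B *\<^sub>v w)"
    using mult_eq_smult_iff[OF coneD(2)[OF w_cone]] rows C_mat_eq[OF refl] by simp
qed

text \<open>The restrictions to the common support are positive eigenvectors of the same irreducible
  matrix, hence proportional, and both vectors sum to one.\<close>

lemma E_set_eq_if_supp_eq:
  assumes w1: "w1 \<in> E_set A B" and w2: "w2 \<in> E_set A B" and supp_eq: "supp w1 = supp w2"
  shows "w1 = w2"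
proof -
  interpret wn_support A B m n "supp w1" by (rule E_set_wn_support[OF w1])
  note w1_cone = E_setD(2)[OF w1] and w2_cone = E_setD(2)[OF w2]
  have z: "restrict_supp w \<in> carrier_vec l" "\<And>b. b < l \<Longrightarrow> restrict_supp w $ b > 0"
    "CS *\<^sub>v restrict_supp w = spec_rad CS \<cdot>\<^sub>v restrict_supp w"
    if "w \<in> E_set A B" "supp w = supp w1" for w
  proof -
    show "restrict_supp w \<in> carrier_vec l" unfolding restrict_supp_eq[OF that(2)] by simp
    show "restrict_supp w $ b > 0" if "b < l" for b
      unfolding restrict_supp_eq[OF \<open>supp w = supp w1\<close>] using that col_at[OF that]
        supp_pos[OF E_setD(2)[OF \<open>w \<in> E_set A B\<close>]] \<open>supp w = supp w1\<close> by simp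
    show "CS *\<^sub>v restrict_supp w = spec_rad CS \<cdot>\<^sub>v restrict_supp w"
      using E_setD(7)[OF that(1)] unfolding C_mat_eq[OF that(2)] PF_eigenvector_def by simp
  qed
  have irr: "irreducible_mat CS" using E_setD(6)[OF w1] C_mat_eq[of w1] by simp
  obtain t where t: "\<forall>b<l. restrict_supp w2 $ b = t * restrict_supp w1 $ b"
    using irreducible_pos_eigenvectors_proportional[OF CS_carrier CS_nonneg irr
        z[OF w1 refl] z[OF w2 supp_eq[symmetric]]] by blast
  have w_t: "w2 $ j = t * w1 $ j" if "j < n" for j
  proof (cases "j \<in> supp w1")
    case True
    then obtain b where "b < l" "col_at b = j" using col_at_surj by blast
    then show ?thesis using t restrict_supp_eq[OF refl] restrict_supp_eq[OF supp_eq[symmetric]] by auto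
  next
    case False
    then show ?thesis using mem_supp_iff[OF w1_cone] mem_supp_iff[OF w2_cone] supp_eq that by auto
  qed
  have "(\<Sum>j<n. w1 $ j) = 1" "(\<Sum>j<n. w2 $ j) = 1"
    using E_setD(1) w1 w2 unfolding prob_vecs_def by auto
  moreover have "(\<Sum>j<n. w2 $ j) = t * (\<Sum>j<n. w1 $ j)" using w_t by (simp add: sum_distrib_left)
  ultimately have "t = 1" by simp
  then show ?thesis using w_t coneD(2)[OF w1_cone] coneD(2)[OF w2_cone] by (intro eq_vecI) auto
qed

lemma finite_E_set: "finite (E_set A B)"
proof (rule inj_on_finite[of supp _ "Pow {..<n}"])
  show "inj_on supp (E_set A B)" using E_set_eq_if_supp_eq by (auto intro: inj_onI)
  show "supp ` E_set A B \<subseteq> Pow {..<n}" using E_setD(2) supp_lt by blast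
qed simp

text \<open>A weakly optimal \<open>y\<close> with smaller support vanishes on the column of some row that, by
  irreducibility, has an edge into the support of \<open>y\<close>; in that row \<open>B y = 0 < A y\<close>.\<close>

lemma E_set_min_weakly_optimal:
  assumes w: "w \<in> E_set A B" and r: "r_fun A B w = rho_hat A B"
  shows "min_weakly_optimal A B w"
proof -
  interpret wn_support A B m n "supp w" by (rule E_set_wn_support[OF w])
  note w_cone = E_setD(2)[OF w]
  have "sub_eigen rho w"
    using r r_fun_le_iff[OF coneD(1,3)[OF w_cone] rho_nonneg] rho_hat_eq_rho by simp
  moreover have False if y: "y \<in> cone" "sub_eigen rho y" "supp y \<subset> supp w" for y
  proof -
    have "irreducible_mat CS" using E_setD(6)[OF w] C_mat_eq[OF refl] by simp
    then obtain j j' where j: "j \<in> supp w - supp y" "j' \<in> supp y" "A $$ (row_of j, j') > 0"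
      using irreducible_CS_crossing[of "supp y"] y(3) supp_nonempty[OF y(1)] by blast
    let ?i = "row_of j"
    have i: "?i < m" using row_of_lt supp_lt[OF w_cone] j(1) by blast
    have "A $$ (?i, j') * y $ j' > 0" using j(3) supp_pos[OF y(1) j(2)] by simp
    moreover have "A $$ (?i, j') * y $ j' \<le> Ax ?i y"
      unfolding Ax_def using supp_lt[OF y(1) j(2)] A_nonneg[OF i] coneD(4)[OF y(1)]
      by (intro member_le_sum) auto
    moreover have "Bx ?i y = 0"
    proof (rule Bx_eq_0[OF i])
      fix k assume k: "k < n" "row_of k = ?i"
      show "y $ k = 0"
      proof (rule ccontr)
        assume "y $ k \<noteq> 0"
        then have "k \<in> supp y" using mem_supp_iff[OF y(1)] k(1) by simp
        then have "k = j" using inj_onD[OF inj_row_of k(2)] y(3) j(1) by blast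
        with \<open>k \<in> supp y\<close> j(1) show False by simp
      qed
    qed
    ultimately show False using y(2) i unfolding sub_eigen_def by fastforce
  qed
  ultimately show ?thesis unfolding min_weakly_optimal_iff using w_cone by blast
qed

lemma min_weakly_optimal_prob_vec_exists: "\<exists>y\<in>prob_vecs n. min_weakly_optimal A B y"
proof -
  obtain x where "weakly_optimal A B x" using weakly_optimal_exists by blast
  then obtain y where y: "weakly_optimal A B y"
    and y_least: "\<And>y'. weakly_optimal A B y' \<Longrightarrow> card (supp y) \<le> card (supp y')"
    using ex_has_least_nat[of "weakly_optimal A B" x "\<lambda>x. card (supp x)"] by blast
  have y_cone: "y \<in> cone" "sub_eigen rho y" using y weakly_optimal_iff by auto
  define w where "w = (1 / (\<Sum>j<n. y $ j)) \<cdot>\<^sub>v y"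
  have w: "w \<in> prob_vecs n" "w \<in> cone" "supp w = supp y" "sub_eigen rho w"
    using normalize_to_prob_vec[OF y_cone(1)] y_cone(2) unfolding w_def by auto
  have "min_weakly_optimal A B w"
    unfolding min_weakly_optimal_def
  proof (intro conjI notI)
    show "weakly_optimal A B w" using w weakly_optimal_iff by simp
    assume "\<exists>y'. weakly_optimal A B y' \<and> supp y' \<subset> supp w"
    then obtain y' where "weakly_optimal A B y'" "card (supp y') < card (supp y)"
      using w(3) finite_supp by (metis psubset_card_mono)
    with y_least show False by fastforce
  qed
  with w(1) show ?thesis by blast
qed

lemma rho_hat_eq_Min_E_set: "rho_hat A B = Min (r_fun A B ` E_set A B)"
proof -
  obtain y where y: "y \<in> prob_vecs n" "min_weakly_optimal A B y"
    using min_weakly_optimal_prob_vec_exists by blast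
  then have "y \<in> E_set A B" "r_fun A B y = rho_hat A B"
    using min_weakly_optimal_in_E_set unfolding min_weakly_optimal_def weakly_optimal_def by auto
  then have "rho_hat A B \<in> r_fun A B ` E_set A B" by (metis image_eqI)
  moreover have "rho_hat A B \<le> r_fun A B w" if "w \<in> E_set A B" for w
    using rho_hat_le_r_fun E_setD(2)[OF that] by blast
  ultimately show ?thesis using finite_E_set by (intro Min_eqI[symmetric]) auto
qed

lemma min_weakly_optimal_weak_GPF_eigenvector:
  assumes mwo: "min_weakly_optimal A B y"
  shows "weak_GPF_eigenvector A B y"
proof -
  have y: "y \<in> cone" using mwo unfolding min_weakly_optimal_iff by auto
  have "A *\<^sub>v y = rho \<cdot>\<^sub>v (B *\<^sub>v y)"
    using mult_eq_smult_iff[OF coneD(2)[OF y]] min_weakly_optimal_tight[OF mwo] by blast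
  then show ?thesis
    using y rho_hat_eq_rho A_carrier unfolding weak_GPF_eigenvector_def cone_def by auto
qed

end

theorem theorem6p2:
  fixes A B :: "real mat" and m n :: nat
  assumes "m > 0"
    and "WN_pair m n A B"
  shows "finite (E_set A B)
    \<and> (\<forall>w\<in>E_set A B. ereal (spec_rad (C_mat A B w)) = r_fun A B w
            \<and> A *\<^sub>v w = spec_rad (C_mat A B w) \<cdot>\<^sub>v (B *\<^sub>v w))
    \<and> rho_hat A B = Min (r_fun A B ` E_set A B)
    \<and> (\<forall>y\<in>prob_vecs n. min_weakly_optimal A B y \<longleftrightarrow>
            (y \<in> E_set A B \<and> r_fun A B y = Min (r_fun A B ` E_set A B)))
    \<and> (\<forall>y. min_weakly_optimal A B y \<longrightarrow> weak_GPF_eigenvector A B y)"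
proof -
  interpret wn_pair A B m n using assms by unfold_locales
  have "min_weakly_optimal A B y \<longleftrightarrow> y \<in> E_set A B \<and> r_fun A B y = rho_hat A B"
    if "y \<in> prob_vecs n" for y
    using min_weakly_optimal_in_E_set[OF _ that] E_set_min_weakly_optimal
    unfolding min_weakly_optimal_def weakly_optimal_def by blast
  then show ?thesis
    using finite_E_set E_set_eigen rho_hat_eq_Min_E_set min_weakly_optimal_weak_GPF_eigenvector
    by simp
qed

end
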